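(* Let $(a:b:c)\in\mathbb{P}^2$ with $(a:b:c)\notin\{(1:\pm1:\pm1)\}\cup\{(1:0:0),(0:1:0),(0:0:1)\}$, and let $X=X_{(a:b:c)}$. If $(a^2-b^2)(a^2-c^2)(b^2-c^2)\neq0$ (equivalently, the blow-up $\widetilde X$ of $X$ along $C_1\cup C_2$ is smooth), then $F_1\cap F_2$ is the only $G$-invariant irreducible curve in $X$. If $(a^2-b^2)(a^2-c^2)(b^2-c^2)=0$ (so $\widetilde X$ is singular), then $X$ contains no $G$-invariant irreducible curves.
   Context: $\mathbb{P}(1,1,2)\times\mathbb{P}(1,1,2)$ has weighted coordinates $(s_1:t_1:w_1)$, $(s_2:t_2:w_2)$ ($s_i,t_i$ of weight 1, $w_i$ of weight 2). Put $q=as_1t_1s_2t_2+\tfrac{b+c}{4}(s_1^2s_2^2+t_1^2t_2^2)+\tfrac{b-c}{4}(s_1^2t_2^2+t_1^2s_2^2)$ and $X_{(a:b:c)}=\{w_1w_2=q\}$; $C_1=\{s_1=t_1=w_2=0\}$, $C_2=\{s_2=t_2=w_1=0\}$; $F_1=\{q=w_1=0\}$, $F_2=\{q=w_2=0\}$ (surfaces in $X$). $G\cong\mathbb{C}^*\rtimes(\mathbb{Z}/2\mathbb{Z})^3$ is the group of automorphisms of $X$ generated by $\tau_1:((s_1:t_1:w_1),(s_2:t_2:w_2))\mapsto((s_2:t_2:w_1),(s_1:t_1:w_2))$, $\tau_2:\mapsto((t_1:s_1:w_1),(t_2:s_2:w_2))$, $\tau_3:\mapsto((s_1:-t_1:w_1),(s_2:-t_2:w_2))$,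 and $\sigma_\lambda:\mapsto((s_1:t_1:\lambda w_1),(s_2:t_2:\lambda^{-1}w_2))$ for $\lambda\in\mathbb{C}^*$. *)

theory Defs
  imports Complex_Main
begin

(* A point of the affine cone over P(1,1,2) x P(1,1,2):
   ((s1:t1:w1),(s2:t2:w2)), weights 1,1,2 in each factor. *)
record pt =
  s1 :: complex
  t1 :: complex
  w1 :: complex
  s2 :: complex
  t2 :: complex
  w2 :: complex

inductive_set polyfun :: "(pt \<Rightarrow> complex) set" where
  pconst: "(\<lambda>_. c) \<in> polyfun"
| ps1: "s1 \<in> polyfun" | pt1: "t1 \<in> polyfun" | pw1: "w1 \<in> polyfun"
| ps2: "s2 \<in> polyfun" | pt2: "t2 \<in> polyfun" | pw2: "w2 \<in> polyfun"
| padd: "f \<in> polyfun \<Longrightarrow> g \<in> polyfun \<Longrightarrow> (\<lambda>x. f x + g x) \<in> polyfun"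
| pmul: "f \<in> polyfun \<Longrightarrow> g \<in> polyfun \<Longrightarrow> (\<lambda>x. f x * g x) \<in> polyfun"

definition qf :: "complex \<Rightarrow> complex \<Rightarrow> complex \<Rightarrow> pt \<Rightarrow> complex" where
  "qf a b c p = a * s1 p * t1 p * s2 p * t2 p
     + (b + c) / 4 * ((s1 p)\<^sup>2 * (s2 p)\<^sup>2 + (t1 p)\<^sup>2 * (t2 p)\<^sup>2)
     + (b - c) / 4 * ((s1 p)\<^sup>2 * (t2 p)\<^sup>2 + (t1 p)\<^sup>2 * (s2 p)\<^sup>2)"

(* the weighted C* x C* action whose orbits are the points of P(1,1,2) x P(1,1,2) *)
definition wscale :: "complex \<Rightarrow> complex \<Rightarrow> pt \<Rightarrow> pt" where
  "wscale l m p = \<lparr>s1 = l * s1 p, t1 = l * t1 p, w1 = l\<^sup>2 * w1 p,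
                    s2 = m * s2 p, t2 = m * t2 p, w2 = m\<^sup>2 * w2 p\<rparr>"

definition saturated :: "pt set \<Rightarrow> bool" where
  "saturated S \<longleftrightarrow> (\<forall>p\<in>S. \<forall>l m. l \<noteq> 0 \<longrightarrow> m \<noteq> 0 \<longrightarrow> wscale l m p \<in> S)"

(* affine cone (minus the two coordinate subspaces) over X_(a:b:c) = {w1 w2 = q} *)
definition Xcone :: "complex \<Rightarrow> complex \<Rightarrow> complex \<Rightarrow> pt set" where
  "Xcone a b c = {p. (s1 p, t1 p, w1 p) \<noteq> (0, 0, 0) \<and> (s2 p, t2 p, w2 p) \<noteq> (0, 0, 0)
                     \<and> w1 p * w2 p = qf a b c p}"

(* Zariski closed subsets of X, represented by their saturated preimages in the cone *)
definition Xclosed :: "complex \<Rightarrow> complex \<Rightarrow> complex \<Rightarrow> pt set \<Rightarrow> bool" where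
  "Xclosed a b c S \<longleftrightarrow> S \<subseteq> Xcone a b c \<and> saturated S \<and>
     (\<exists>P \<subseteq> polyfun. S = {p \<in> Xcone a b c. \<forall>f\<in>P. f p = 0})"

definition Xirreducible :: "complex \<Rightarrow> complex \<Rightarrow> complex \<Rightarrow> pt set \<Rightarrow> bool" where
  "Xirreducible a b c S \<longleftrightarrow> Xclosed a b c S \<and> S \<noteq> {} \<and>
     (\<forall>A B. Xclosed a b c A \<longrightarrow> Xclosed a b c B \<longrightarrow> S = A \<union> B \<longrightarrow> S = A \<or> S = B)"

(* irreducible curve: irreducible closed subset of dimension 1
   (maximal chain of irreducible closed subsets inside it has length exactly 1) *)
definition Xcurve :: "complex \<Rightarrow> complex \<Rightarrow> complex \<Rightarrow> pt set \<Rightarrow> bool" where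
  "Xcurve a b c C \<longleftrightarrow> Xirreducible a b c C \<and>
     (\<exists>Z. Xirreducible a b c Z \<and> Z \<subset> C) \<and>
     \<not> (\<exists>Z1 Z2. Xirreducible a b c Z1 \<and> Xirreducible a b c Z2 \<and> Z1 \<subset> Z2 \<and> Z2 \<subset> C)"

definition tau1 :: "pt \<Rightarrow> pt" where
  "tau1 p = \<lparr>s1 = s2 p, t1 = t2 p, w1 = w1 p, s2 = s1 p, t2 = t1 p, w2 = w2 p\<rparr>"
definition tau2 :: "pt \<Rightarrow> pt" where
  "tau2 p = \<lparr>s1 = t1 p, t1 = s1 p, w1 = w1 p, s2 = t2 p, t2 = s2 p, w2 = w2 p\<rparr>"
definition tau3 :: "pt \<Rightarrow> pt" where
  "tau3 p = \<lparr>s1 = s1 p, t1 = - t1 p, w1 = w1 p, s2 = s2 p, t2 = - t2 p, w2 = w2 p\<rparr>"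
definition sigma :: "complex \<Rightarrow> pt \<Rightarrow> pt" where
  "sigma l p = \<lparr>s1 = s1 p, t1 = t1 p, w1 = l * w1 p, s2 = s2 p, t2 = t2 p, w2 = inverse l * w2 p\<rparr>"

definition Ggens :: "(pt \<Rightarrow> pt) set" where
  "Ggens = {tau1, tau2, tau3} \<union> {sigma l | l. l \<noteq> 0}"

(* the group G generated by the generators (all are invertible with inverses among
   the generators, so the monoid generated is the group) *)
inductive_set Gset :: "(pt \<Rightarrow> pt) set" where
  Gid: "id \<in> Gset"
| Gstep: "g \<in> Ggens \<Longrightarrow> h \<in> Gset \<Longrightarrow> g \<circ> h \<in> Gset"

definition Ginvariant :: "pt set \<Rightarrow> bool" where
  "Ginvariant S \<longleftrightarrow> (\<forall>g\<in>Gset. g ` S = S)"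

definition F12 :: "complex \<Rightarrow> complex \<Rightarrow> complex \<Rightarrow> pt set" where
  "F12 a b c = {p \<in> Xcone a b c. qf a b c p = 0 \<and> w1 p = 0 \<and> w2 p = 0}"

definition proj_eq :: "complex \<times> complex \<times> complex \<Rightarrow> complex \<times> complex \<times> complex \<Rightarrow> bool" where
  "proj_eq u v \<longleftrightarrow> (\<exists>k. k \<noteq> 0 \<and> (case v of (x, y, z) \<Rightarrow> u = (k * x, k * y, k * z)))"

end

theory Submission
  imports Defs "HOL-Computational_Algebra.Polynomial"
begin

text \<open>Let \<open>C\<close> be a \<open>G\<close>-invariant curve. If a point \<open>p \<in> C\<close> had \<open>w\<^sub>1 \<noteq> 0\<close> or
  \<open>w\<^sub>2 \<noteq> 0\<close>, the closure of its \<open>\<sigma>\<close>-orbit would be an irreducible closed subset of \<open>C\<close> larger than a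
  point, hence all of \<open>C\<close>; but along it the ratio \<open>(s\<^sub>1 : t\<^sub>1)\<close> is constant, which \<open>\<tau>\<^sub>2\<close> and \<open>\<tau>\<^sub>3\<close>
  forbid. So \<open>C \<subseteq> F\<^sub>1 \<inter> F\<^sub>2\<close>.

  If \<open>(a\<^sup>2 - b\<^sup>2)(a\<^sup>2 - c\<^sup>2)(b\<^sup>2 - c\<^sup>2) \<noteq> 0\<close>, then in the charts \<open>t\<^sub>1 = t\<^sub>2 = 1\<close> and \<open>s\<^sub>1 = s\<^sub>2 = 1\<close> the
  set \<open>F\<^sub>1 \<inter> F\<^sub>2\<close> is a conic whose discriminant (as a quadratic in one variable) has a simple root,
  so it is irreducible and its proper closed subsets are finite sets of points: \<open>F\<^sub>1 \<inter> F\<^sub>2\<close> is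
  an irreducible curve and equals \<open>C\<close>. Otherwise \<open>q\<close> is a sum of two squares \<open>B P\<^sup>2 + K R\<^sup>2\<close>
  (when \<open>a = \<plusminus>b\<close> or \<open>a = \<plusminus>c\<close>) or a product of two forms in \<open>U, V\<close> (when \<open>c = \<plusminus>b\<close>); on an
  invariant irreducible set inside \<open>{q = 0}\<close> a generator of \<open>G\<close> swaps the factors, so all of them
  vanish, and iterating forces \<open>s\<^sub>1 = t\<^sub>1 = 0\<close>, which is impossible.\<close>

section \<open>Closed subsets of X\<close>

lemma pt_eqI:
  "s1 p = s1 q \<Longrightarrow> t1 p = t1 q \<Longrightarrow> w1 p = w1 q \<Longrightarrow> s2 p = s2 q \<Longrightarrow> t2 p = t2 q \<Longrightarrow> w2 p = w2 q
   \<Longrightarrow> p = (q::pt)"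
  by (cases p, cases q) auto

lemma polyfun_diff: "f \<in> polyfun \<Longrightarrow> g \<in> polyfun \<Longrightarrow> (\<lambda>x. f x - g x) \<in> polyfun"
  using padd[OF _ pmul[OF pconst, of g "-1"], of f] by simp

lemma polyfun_power: "f \<in> polyfun \<Longrightarrow> (\<lambda>x. f x ^ n) \<in> polyfun"
  by (induction n) (auto intro: pmul pconst[of 1] simp: mult.commute)

lemma qf_polyfun: "qf a b c \<in> polyfun"
  unfolding qf_def by (intro padd pmul pconst polyfun_power ps1 pt1 ps2 pt2)

lemma wscale_sel [simp]:
  "s1 (wscale l m p) = l * s1 p" "t1 (wscale l m p) = l * t1 p" "w1 (wscale l m p) = l\<^sup>2 * w1 p"
  "s2 (wscale l m p) = m * s2 p" "t2 (wscale l m p) = m * t2 p" "w2 (wscale l m p) = m\<^sup>2 * w2 p"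
  by (simp_all add: wscale_def)

lemma wscale_wscale: "wscale l m (wscale l' m' p) = wscale (l * l') (m * m') p"
  by (simp add: wscale_def power_mult_distrib)

lemma wscale_1: "wscale 1 1 p = p"
  by (rule pt_eqI) auto

lemma qf_proportional:
  "s1 x = l * s1 y \<Longrightarrow> t1 x = l * t1 y \<Longrightarrow> s2 x = m * s2 y \<Longrightarrow> t2 x = m * t2 y \<Longrightarrow>
   qf a b c x = l\<^sup>2 * m\<^sup>2 * qf a b c y"
  by (simp add: qf_def power2_eq_square algebra_simps)

lemma qf_wscale: "qf a b c (wscale l m p) = l\<^sup>2 * m\<^sup>2 * qf a b c p"
  by (rule qf_proportional) simp_all

lemma XconeD:
  "p \<in> Xcone a b c \<Longrightarrow>
   (s1 p, t1 p, w1 p) \<noteq> (0, 0, 0) \<and> (s2 p, t2 p, w2 p) \<noteq> (0, 0, 0) \<and> w1 p * w2 p = qf a b c p"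
  by (simp add: Xcone_def)

lemma XconeI:
  "(s1 p, t1 p, w1 p) \<noteq> (0, 0, 0) \<Longrightarrow> (s2 p, t2 p, w2 p) \<noteq> (0, 0, 0) \<Longrightarrow> w1 p * w2 p = qf a b c p
   \<Longrightarrow> p \<in> Xcone a b c"
  by (simp add: Xcone_def)

lemma Xcone_wscale: "p \<in> Xcone a b c \<Longrightarrow> l \<noteq> 0 \<Longrightarrow> m \<noteq> 0 \<Longrightarrow> wscale l m p \<in> Xcone a b c"
  unfolding Xcone_def by (simp add: qf_wscale power2_eq_square algebra_simps)

lemma saturatedD: "saturated S \<Longrightarrow> p \<in> S \<Longrightarrow> l \<noteq> 0 \<Longrightarrow> m \<noteq> 0 \<Longrightarrow> wscale l m p \<in> S"
  unfolding saturated_def by blast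

lemma XclosedD: "Xclosed a b c S \<Longrightarrow> saturated S" "Xclosed a b c S \<Longrightarrow> S \<subseteq> Xcone a b c"
  by (simp_all add: Xclosed_def)

lemma XclosedE:
  assumes "Xclosed a b c S"
  obtains P where "P \<subseteq> polyfun" "S = {p \<in> Xcone a b c. \<forall>f\<in>P. f p = 0}"
  using assms unfolding Xclosed_def by blast

lemma Xclosed_Xcone: "Xclosed a b c (Xcone a b c)"
  unfolding Xclosed_def saturated_def
  by (intro conjI ballI allI impI exI[of _ "{}"]) (auto intro: Xcone_wscale)

lemma Xclosed_empty: "Xclosed a b c {}"
  unfolding Xclosed_def saturated_def
  by (intro conjI exI[of _ "{\<lambda>_. 1}"]) (auto intro: pconst)

lemma Xclosed_Int:
  assumes A: "Xclosed a b c A" and B: "Xclosed a b c B"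
  shows "Xclosed a b c (A \<inter> B)"
proof -
  obtain P where P: "P \<subseteq> polyfun" "A = {p \<in> Xcone a b c. \<forall>f\<in>P. f p = 0}" using A by (rule XclosedE)
  obtain Q where Q: "Q \<subseteq> polyfun" "B = {p \<in> Xcone a b c. \<forall>f\<in>Q. f p = 0}" using B by (rule XclosedE)
  have "A \<inter> B = {p \<in> Xcone a b c. \<forall>f\<in>P \<union> Q. f p = 0}" using P Q by auto
  moreover have "saturated (A \<inter> B)"
    using XclosedD(1)[OF A] XclosedD(1)[OF B] unfolding saturated_def by blast
  ultimately show ?thesis using P Q unfolding Xclosed_def by (intro conjI exI[of _ "P \<union> Q"]) auto
qed

text \<open>The union is cut out by the pairwise products of the defining polynomials.\<close>

lemma Xclosed_Un:
  assumes A: "Xclosed a b c A" and B: "Xclosed a b c B"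
  shows "Xclosed a b c (A \<union> B)"
proof -
  obtain P where P: "P \<subseteq> polyfun" "A = {p \<in> Xcone a b c. \<forall>f\<in>P. f p = 0}" using A by (rule XclosedE)
  obtain Q where Q: "Q \<subseteq> polyfun" "B = {p \<in> Xcone a b c. \<forall>f\<in>Q. f p = 0}" using B by (rule XclosedE)
  define R where "R = {(\<lambda>x. f x * g x) | f g. f \<in> P \<and> g \<in> Q}"
  have R: "R \<subseteq> polyfun" using P Q unfolding R_def by (auto intro: pmul)
  have "A \<union> B = {p \<in> Xcone a b c. \<forall>h\<in>R. h p = 0}"
  proof (intro equalityI subsetI)
    fix p assume "p \<in> A \<union> B"
    then show "p \<in> {p \<in> Xcone a b c. \<forall>h\<in>R. h p = 0}" using P Q unfolding R_def by auto
  next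
    fix p assume p: "p \<in> {p \<in> Xcone a b c. \<forall>h\<in>R. h p = 0}"
    show "p \<in> A \<union> B"
    proof (rule ccontr)
      assume "p \<notin> A \<union> B"
      then obtain f g where "f \<in> P" "g \<in> Q" "f p \<noteq> 0" "g p \<noteq> 0" using p P Q by auto
      moreover have "(\<lambda>x. f x * g x) \<in> R" using \<open>f \<in> P\<close> \<open>g \<in> Q\<close> unfolding R_def by blast
      ultimately show False using p by auto
    qed
  qed
  moreover have "saturated (A \<union> B)"
    using XclosedD(1)[OF A] XclosedD(1)[OF B] unfolding saturated_def by blast
  ultimately show ?thesis using R P Q unfolding Xclosed_def by (intro conjI exI[of _ R]) auto
qed

lemma Xclosed_Int_zeros:
  assumes A: "Xclosed a b c A" and f: "f \<in> polyfun"
    and hom: "\<And>x l m. f x = 0 \<Longrightarrow> l \<noteq> 0 \<Longrightarrow> m \<noteq> 0 \<Longrightarrow> f (wscale l m x) = 0"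
  shows "Xclosed a b c (A \<inter> {x. f x = 0})"
proof -
  obtain P where P: "P \<subseteq> polyfun" "A = {p \<in> Xcone a b c. \<forall>f\<in>P. f p = 0}" using A by (rule XclosedE)
  have "A \<inter> {x. f x = 0} = {p \<in> Xcone a b c. \<forall>g\<in>insert f P. g p = 0}" using P by auto
  moreover have "saturated (A \<inter> {x. f x = 0})"
    using XclosedD(1)[OF A] hom unfolding saturated_def by blast
  ultimately show ?thesis using P f unfolding Xclosed_def by (intro conjI exI[of _ "insert f P"]) auto
qed

lemma XirreducibleD:
  assumes "Xirreducible a b c C"
  shows "Xclosed a b c C" "C \<noteq> {}"
    "\<And>A B. Xclosed a b c A \<Longrightarrow> Xclosed a b c B \<Longrightarrow> C = A \<union> B \<Longrightarrow> C = A \<or> C = B"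
  using assms unfolding Xirreducible_def by auto

lemma XcurveD:
  assumes "Xcurve a b c C"
  shows "Xirreducible a b c C" "\<exists>Z. Xirreducible a b c Z \<and> Z \<subset> C"
    "\<And>Z1 Z2. Xirreducible a b c Z1 \<Longrightarrow> Xirreducible a b c Z2 \<Longrightarrow> Z1 \<subset> Z2 \<Longrightarrow> Z2 \<subset> C \<Longrightarrow> False"
  using assms unfolding Xcurve_def by auto

lemma Xcurve_closed: "Xcurve a b c C \<Longrightarrow> Xclosed a b c C"
  using XcurveD(1) XirreducibleD(1) by blast

lemma Xcurve_subset_Xcone: "Xcurve a b c C \<Longrightarrow> C \<subseteq> Xcone a b c"
  using XclosedD(2)[OF Xcurve_closed] .

lemma Xcurve_eq_if_between:
  assumes C: "Xcurve a b c C" and Z: "Xirreducible a b c Z" "Z \<subseteq> C"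
    and Y: "Xirreducible a b c Y" "Y \<subset> Z"
  shows "Z = C"
  using XcurveD(3)[OF C Y(1) Z(1) Y(2)] Z(2) by blast

section \<open>Orbits of the scaling action: the points of X\<close>

definition orbit :: "pt \<Rightarrow> pt set" where
  "orbit p = {wscale l m p | l m. l \<noteq> 0 \<and> m \<noteq> 0}"

lemma orbitI: "q = wscale l m p \<Longrightarrow> l \<noteq> 0 \<Longrightarrow> m \<noteq> 0 \<Longrightarrow> q \<in> orbit p"
  unfolding orbit_def by blast

lemma orbitE:
  assumes "q \<in> orbit p"
  obtains l m where "q = wscale l m p" "l \<noteq> 0" "m \<noteq> 0"
  using assms unfolding orbit_def by blast

lemma self_in_orbit: "p \<in> orbit p"
  by (rule orbitI[of _ 1 1]) (simp_all add: wscale_1)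

lemma saturated_orbit: "saturated (orbit p)"
  unfolding saturated_def by (auto elim!: orbitE intro!: orbitI simp: wscale_wscale)

lemma orbit_subset: "saturated S \<Longrightarrow> p \<in> S \<Longrightarrow> orbit p \<subseteq> S"
  by (auto elim!: orbitE intro: saturatedD)

lemma orbit_trans: "q \<in> orbit p \<Longrightarrow> p \<in> orbit r \<Longrightarrow> q \<in> orbit r"
  using orbit_subset[OF saturated_orbit] by blast

lemma orbit_sym: "q \<in> orbit p \<Longrightarrow> p \<in> orbit q"
proof (elim orbitE)
  fix l m assume lm: "q = wscale l m p" "l \<noteq> 0" "m \<noteq> 0"
  have "p = wscale (1 / l) (1 / m) q" using lm(2,3) unfolding lm(1) by (simp add: wscale_wscale wscale_1)
  then show "p \<in> orbit q" using lm(2,3) by (intro orbitI[of p "1 / l" "1 / m"]) simp_all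
qed

lemma saturated_subset_orbit_eq:
  assumes "saturated Z" "Z \<subseteq> orbit e" "Z \<noteq> {}"
  shows "Z = orbit e"
proof -
  obtain z where z: "z \<in> Z" using assms(3) by blast
  then have "e \<in> orbit z" using assms(2) orbit_sym by blast
  then have "orbit e \<subseteq> orbit z" using orbit_subset[OF saturated_orbit] by blast
  also have "\<dots> \<subseteq> Z" using orbit_subset[OF assms(1) z] .
  finally show ?thesis using assms(2) by blast
qed

text \<open>A point of weighted projective space \<open>P(1,1,2)\<close> is cut out by three polynomials; this
  covers the points with \<open>s = t = 0\<close> as well.\<close>

lemma weighted_point_zeros:
  fixes S T W :: "pt \<Rightarrow> complex"
  assumes p: "(S p, T p, W p) \<noteq> (0, 0, 0)" and x: "(S x, T x, W x) \<noteq> (0, 0, 0)"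
  shows "(S x * T p = T x * S p \<and> (S x)\<^sup>2 * W p = W x * (S p)\<^sup>2 \<and> (T x)\<^sup>2 * W p = W x * (T p)\<^sup>2) \<longleftrightarrow>
    (\<exists>l. l \<noteq> 0 \<and> S x = l * S p \<and> T x = l * T p \<and> W x = l\<^sup>2 * W p)"
    (is "?eqs \<longleftrightarrow> ?prop")
proof
  assume eqs: ?eqs
  have "\<exists>l. S x = l * S p \<and> T x = l * T p \<and> W x = l\<^sup>2 * W p"
  proof (cases "S p = 0 \<and> T p = 0")
    case True
    then have "W p \<noteq> 0" "S x = 0" "T x = 0" using p eqs by auto
    then show ?thesis using True by (intro exI[of _ "csqrt (W x / W p)"]) simp
  next
    case False
    define l where "l = (if S p \<noteq> 0 then S x / S p else T x / T p)"
    show ?thesis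
      using False eqs by (intro exI[of _ l]) (auto simp: l_def field_simps power2_eq_square)
  qed
  then show ?prop using x by fastforce
qed (auto simp: power2_eq_square)

lemma orbit_Xclosed:
  assumes p: "p \<in> Xcone a b c"
  shows "Xclosed a b c (orbit p)"
proof -
  define P :: "(pt \<Rightarrow> complex) set" where "P = {\<lambda>x. s1 x * t1 p - t1 x * s1 p, \<lambda>x. (s1 x)\<^sup>2 * w1 p - w1 x * (s1 p)\<^sup>2,
      \<lambda>x. (t1 x)\<^sup>2 * w1 p - w1 x * (t1 p)\<^sup>2, \<lambda>x. s2 x * t2 p - t2 x * s2 p,
      \<lambda>x. (s2 x)\<^sup>2 * w2 p - w2 x * (s2 p)\<^sup>2, \<lambda>x. (t2 x)\<^sup>2 * w2 p - w2 x * (t2 p)\<^sup>2}"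
  have "P \<subseteq> polyfun"
    unfolding P_def by (auto intro!: polyfun_diff pmul polyfun_power pconst ps1 pt1 pw1 ps2 pt2 pw2)
  moreover have "orbit p = {x \<in> Xcone a b c. \<forall>f\<in>P. f x = 0}"
  proof (intro equalityI subsetI)
    fix x assume "x \<in> orbit p"
    then show "x \<in> {x \<in> Xcone a b c. \<forall>f\<in>P. f x = 0}"
      using p by (auto elim!: orbitE intro: Xcone_wscale simp: P_def power_mult_distrib)
  next
    fix x assume x: "x \<in> {x \<in> Xcone a b c. \<forall>f\<in>P. f x = 0}"
    have nz: "(s1 x, t1 x, w1 x) \<noteq> (0, 0, 0)" "(s2 x, t2 x, w2 x) \<noteq> (0, 0, 0)"
      "(s1 p, t1 p, w1 p) \<noteq> (0, 0, 0)" "(s2 p, t2 p, w2 p) \<noteq> (0, 0, 0)"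
      using x p by (auto dest: XconeD)
    obtain l m where "l \<noteq> 0" "s1 x = l * s1 p" "t1 x = l * t1 p" "w1 x = l\<^sup>2 * w1 p"
      and "m \<noteq> 0" "s2 x = m * s2 p" "t2 x = m * t2 p" "w2 x = m\<^sup>2 * w2 p"
      using weighted_point_zeros[of s1 p t1 w1 x, OF nz(3,1)]
        weighted_point_zeros[of s2 p t2 w2 x, OF nz(4,2)] x by (auto simp: P_def)
    then show "x \<in> orbit p" by (intro orbitI[of _ l m]) (auto intro: pt_eqI)
  qed
  ultimately show ?thesis
    using saturated_orbit unfolding Xclosed_def by blast
qed

lemma orbit_Xirreducible:
  assumes p: "p \<in> Xcone a b c"
  shows "Xirreducible a b c (orbit p)"
  unfolding Xirreducible_def
proof (intro conjI allI impI)
  show "Xclosed a b c (orbit p)" by (rule orbit_Xclosed[OF p])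
  show "orbit p \<noteq> {}" using self_in_orbit by blast
  fix A B assume A: "Xclosed a b c A" and B: "Xclosed a b c B" and e: "orbit p = A \<union> B"
  then have "p \<in> A \<or> p \<in> B" using self_in_orbit by blast
  then show "orbit p = A \<or> orbit p = B"
    using orbit_subset[OF XclosedD(1)[OF A]] orbit_subset[OF XclosedD(1)[OF B]] e by blast
qed

lemma Xclosed_UN_orbits:
  assumes "finite S" "S \<subseteq> Xcone a b c"
  shows "Xclosed a b c (\<Union>e\<in>S. orbit e)"
  using assms
proof (induction S rule: finite_induct)
  case empty then show ?case by (simp add: Xclosed_empty)
next
  case (insert e S)
  then have "Xclosed a b c (orbit e \<union> (\<Union>e\<in>S. orbit e))" by (intro Xclosed_Un orbit_Xclosed) auto
  then show ?case by simp
qed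

lemma Xirreducible_subset_UN_orbits:
  assumes "finite S" "S \<subseteq> Xcone a b c" "Xirreducible a b c Z" "Z \<subseteq> (\<Union>e\<in>S. orbit e)"
  shows "\<exists>e\<in>S. Z = orbit e"
  using assms
proof (induction S rule: finite_induct)
  case empty then show ?case using XirreducibleD(2) by auto
next
  case (insert e S)
  have Zc: "Xclosed a b c Z" by (rule XirreducibleD(1)[OF insert.prems(2)])
  have "Xclosed a b c (Z \<inter> orbit e)" "Xclosed a b c (Z \<inter> (\<Union>e\<in>S. orbit e))"
    using insert Zc by (intro Xclosed_Int orbit_Xclosed Xclosed_UN_orbits; auto)+
  moreover have "Z = (Z \<inter> orbit e) \<union> (Z \<inter> (\<Union>e\<in>S. orbit e))" using insert.prems(3) by auto
  ultimately have "Z \<subseteq> orbit e \<or> Z \<subseteq> (\<Union>e\<in>S. orbit e)"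
    using XirreducibleD(3)[OF insert.prems(2)] by blast
  then show ?case
  proof
    assume "Z \<subseteq> orbit e"
    then show ?thesis
      using saturated_subset_orbit_eq[OF XclosedD(1)[OF Zc] _ XirreducibleD(2)[OF insert.prems(2)]] by blast
  qed (use insert in blast)
qed

section \<open>Polynomial curves in the cone\<close>

definition poly_fun :: "(complex \<Rightarrow> complex) \<Rightarrow> bool" where
  "poly_fun f \<longleftrightarrow> (\<exists>q. \<forall>t. f t = poly q t)"

lemma poly_fun_const: "poly_fun (\<lambda>t. c)"
  unfolding poly_fun_def by (rule exI[of _ "[:c:]"]) simp

lemma poly_fun_id: "poly_fun (\<lambda>t. t)"
  unfolding poly_fun_def by (rule exI[of _ "[:0, 1:]"]) simp

lemma poly_fun_add: "poly_fun f \<Longrightarrow> poly_fun g \<Longrightarrow> poly_fun (\<lambda>t. f t + g t)"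
  unfolding poly_fun_def by (metis poly_add)

lemma poly_fun_mult: "poly_fun f \<Longrightarrow> poly_fun g \<Longrightarrow> poly_fun (\<lambda>t. f t * g t)"
  unfolding poly_fun_def by (metis poly_mult)

lemma poly_fun_power: "poly_fun f \<Longrightarrow> poly_fun (\<lambda>t. f t ^ n)"
  by (induction n) (simp_all add: poly_fun_const poly_fun_mult)

lemmas poly_fun_intros = poly_fun_const poly_fun_id poly_fun_add poly_fun_mult poly_fun_power

definition poly_curve :: "(complex \<Rightarrow> pt) \<Rightarrow> bool" where
  "poly_curve g \<longleftrightarrow>
     poly_fun (\<lambda>t. s1 (g t)) \<and> poly_fun (\<lambda>t. t1 (g t)) \<and> poly_fun (\<lambda>t. w1 (g t)) \<and>
     poly_fun (\<lambda>t. s2 (g t)) \<and> poly_fun (\<lambda>t. t2 (g t)) \<and> poly_fun (\<lambda>t. w2 (g t))"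

lemma poly_curve_polyfun:
  assumes "f \<in> polyfun" "poly_curve g"
  shows "poly_fun (\<lambda>t. f (g t))"
  using assms(1)
proof induction
  case (pconst c) then show ?case by (rule poly_fun_const)
next
  case (padd f1 f2) show ?case by (rule poly_fun_add[OF padd.IH])
next
  case (pmul f1 f2) show ?case by (rule poly_fun_mult[OF pmul.IH])
qed (use assms(2) in \<open>simp_all add: poly_curve_def\<close>)

lemma Xclosed_poly_curve_finite_or_all:
  assumes A: "Xclosed a b c A" and g: "poly_curve g"
  shows "finite {t. g t \<in> A} \<or> (\<forall>t. g t \<in> Xcone a b c \<longrightarrow> g t \<in> A)"
proof -
  obtain P where P: "P \<subseteq> polyfun" "A = {p \<in> Xcone a b c. \<forall>f\<in>P. f p = 0}" using A by (rule XclosedE)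
  show ?thesis
  proof (cases "\<forall>f\<in>P. \<forall>t. f (g t) = 0")
    case True then show ?thesis using P by auto
  next
    case False
    then obtain f t0 where f: "f \<in> P" "f (g t0) \<noteq> 0" by blast
    obtain q where q: "\<And>t. f (g t) = poly q t"
      using poly_curve_polyfun[OF _ g, of f] f P unfolding poly_fun_def by blast
    have "q \<noteq> 0" using f q[of t0] by auto
    then have "finite {t. poly q t = 0}" by (rule poly_roots_finite)
    moreover have "{t. g t \<in> A} \<subseteq> {t. poly q t = 0}" using P f q by auto
    ultimately show ?thesis using finite_subset by blast
  qed
qed

lemma poly_curve_in_Xclosed:
  assumes A: "Xclosed a b c A" and g: "poly_curve g" and X: "\<And>t. g t \<in> Xcone a b c"
    and nz: "\<And>t. t \<noteq> 0 \<Longrightarrow> g t \<in> A"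
  shows "g t \<in> A"
proof -
  have "- {0} \<subseteq> {t. g t \<in> A}" using nz by auto
  moreover have "infinite (- {0::complex})" by (simp add: infinite_UNIV_char_0)
  ultimately have "infinite {t. g t \<in> A}" using finite_subset by blast
  then show ?thesis using Xclosed_poly_curve_finite_or_all[OF A g] X by blast
qed

text \<open>The two curves, glued along \<open>u \<mapsto> 1/u\<close>, parametrise a projective line.\<close>

lemma Xirreducible_by_poly_curves:
  assumes Z: "Xclosed a b c Z" and g1: "poly_curve g1" and g2: "poly_curve g2"
    and in1: "\<And>u. g1 u \<in> Z" and in2: "\<And>u. g2 u \<in> Z"
    and glue: "\<And>u. u \<noteq> 0 \<Longrightarrow> g2 u \<in> orbit (g1 (1 / u))"
    and cover: "\<And>z. z \<in> Z \<Longrightarrow> \<exists>u. z \<in> orbit (g1 u) \<or> z \<in> orbit (g2 u)"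
  shows "Xirreducible a b c Z"
proof -
  have ZX: "Z \<subseteq> Xcone a b c" by (rule XclosedD(2)[OF Z])
  have Z_subset: "Z \<subseteq> A" if A: "Xclosed a b c A" and inf: "infinite {t. g1 t \<in> A}" for A
  proof -
    have all1: "g1 t \<in> A" for t
      using Xclosed_poly_curve_finite_or_all[OF A g1] inf in1 ZX by blast
    have all2: "g2 t \<in> A" for t
    proof (rule poly_curve_in_Xclosed[OF A g2])
      show "g2 u \<in> Xcone a b c" for u using in2 ZX by blast
      show "g2 u \<in> A" if "u \<noteq> 0" for u
        using glue[OF that] orbit_subset[OF XclosedD(1)[OF A] all1] by blast
    qed
    show ?thesis
    proof
      fix z assume "z \<in> Z"
      then obtain u where "z \<in> orbit (g1 u) \<or> z \<in> orbit (g2 u)" using cover by blast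
      then show "z \<in> A"
        using orbit_subset[OF XclosedD(1)[OF A] all1] orbit_subset[OF XclosedD(1)[OF A] all2] by blast
    qed
  qed
  show ?thesis unfolding Xirreducible_def
  proof (intro conjI allI impI)
    show "Xclosed a b c Z" by (rule Z)
    show "Z \<noteq> {}" using in1 by blast
    fix A B assume A: "Xclosed a b c A" and B: "Xclosed a b c B" and e: "Z = A \<union> B"
    have "{t. g1 t \<in> A} \<union> {t. g1 t \<in> B} = UNIV" using e in1 by auto
    then have "infinite {t. g1 t \<in> A} \<or> infinite {t. g1 t \<in> B}"
      by (metis finite_UnI infinite_UNIV_char_0)
    then show "Z = A \<or> Z = B" using Z_subset[OF A] Z_subset[OF B] e by blast
  qed
qed

section \<open>Invariant curves lie in \<open>F\<^sub>1 \<inter> F\<^sub>2\<close>\<close>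

lemma Ggens_subset_Gset: "g \<in> Ggens \<Longrightarrow> g \<in> Gset"
  using Gstep[OF _ Gid, of g] by simp

lemma Ginvariant_imageD: "Ginvariant C \<Longrightarrow> g \<in> Ggens \<Longrightarrow> x \<in> C \<Longrightarrow> g x \<in> C"
  unfolding Ginvariant_def using Ggens_subset_Gset by blast

lemma in_Ggens: "tau1 \<in> Ggens" "tau2 \<in> Ggens" "tau3 \<in> Ggens" "l \<noteq> 0 \<Longrightarrow> sigma l \<in> Ggens"
  unfolding Ggens_def by auto

lemma Ggens_sel [simp]:
  "s1 (tau1 p) = s2 p" "t1 (tau1 p) = t2 p" "w1 (tau1 p) = w1 p"
  "s2 (tau1 p) = s1 p" "t2 (tau1 p) = t1 p" "w2 (tau1 p) = w2 p"
  "s1 (tau2 p) = t1 p" "t1 (tau2 p) = s1 p" "w1 (tau2 p) = w1 p"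
  "s2 (tau2 p) = t2 p" "t2 (tau2 p) = s2 p" "w2 (tau2 p) = w2 p"
  "s1 (tau3 p) = s1 p" "t1 (tau3 p) = - t1 p" "w1 (tau3 p) = w1 p"
  "s2 (tau3 p) = s2 p" "t2 (tau3 p) = - t2 p" "w2 (tau3 p) = w2 p"
  "s1 (sigma l p) = s1 p" "t1 (sigma l p) = t1 p" "w1 (sigma l p) = l * w1 p"
  "s2 (sigma l p) = s2 p" "t2 (sigma l p) = t2 p" "w2 (sigma l p) = inverse l * w2 p"
  by (simp_all add: tau1_def tau2_def tau3_def sigma_def)

lemma qf_Ggens:
  "qf a b c (tau1 p) = qf a b c p" "qf a b c (tau2 p) = qf a b c p" "qf a b c (tau3 p) = qf a b c p"
  "qf a b c (sigma l p) = qf a b c p"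
  by (simp_all add: qf_def algebra_simps)

text \<open>If \<open>s\<^sub>1 = t\<^sub>1 = 0\<close> at a point of \<open>X\<close> then \<open>w\<^sub>1 \<noteq> 0 = w\<^sub>2\<close>, and \<open>\<tau>\<^sub>1\<close> moves the point out of the
  cone; this is where invariance under \<open>\<tau>\<^sub>1\<close> enters.\<close>

lemma Ginvariant_st_nonzero:
  assumes G: "Ginvariant C" and CX: "C \<subseteq> Xcone a b c" and p: "p \<in> C"
  shows "(s1 p, t1 p) \<noteq> (0, 0)" "(s2 p, t2 p) \<noteq> (0, 0)"
proof -
  have pX: "p \<in> Xcone a b c" and tX: "tau1 p \<in> Xcone a b c"
    using p Ginvariant_imageD[OF G in_Ggens(1) p] CX by blast+
  show "(s1 p, t1 p) \<noteq> (0, 0)" "(s2 p, t2 p) \<noteq> (0, 0)"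
    using XconeD[OF pX] XconeD[OF tX] by (auto simp: qf_def)
qed

lemma proportional_pair:
  assumes "(s, t) \<noteq> (0::complex, 0)" "s' * t = t' * s"
  shows "\<exists>l. s' = l * s \<and> t' = l * t"
proof (cases "s = 0")
  case True
  then show ?thesis using assms by (intro exI[of _ "t' / t"]) (auto simp: field_simps)
next
  case False
  then show ?thesis using assms by (intro exI[of _ "s' / s"]) (auto simp: field_simps)
qed

text \<open>By dimension such a \<open>Z\<close> is all of \<open>C\<close>, but no ratio \<open>(s\<^sub>1 : t\<^sub>1)\<close> is fixed by both \<open>\<tau>\<^sub>2\<close> and \<open>\<tau>\<^sub>3\<close>.\<close>

lemma Ginvariant_curve_no_constant_ratio:
  assumes C: "Xcurve a b c C" and G: "Ginvariant C" and pC: "p \<in> C"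
    and Z: "Xirreducible a b c Z" "Z \<subseteq> C" "p \<in> Z" "\<not> Z \<subseteq> orbit p"
    and ratio: "\<And>x. x \<in> Z \<Longrightarrow> s1 x * t1 p = t1 x * s1 p"
  shows False
proof -
  have "orbit p \<subset> Z" using orbit_subset[OF XclosedD(1)[OF XirreducibleD(1)[OF Z(1)]] Z(3)] Z(4)
    by blast
  moreover have "p \<in> Xcone a b c" using pC Xcurve_subset_Xcone[OF C] by blast
  ultimately have "Z = C" using Xcurve_eq_if_between[OF C Z(1,2) orbit_Xirreducible] by blast
  then have "tau2 p \<in> Z" "tau3 p \<in> Z"
    using Ginvariant_imageD[OF G in_Ggens(2) pC] Ginvariant_imageD[OF G in_Ggens(3) pC] by auto
  from ratio[OF this(1)] ratio[OF this(2)]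
  have "s1 p * t1 p = 0" "t1 p * t1 p = s1 p * s1 p" by auto
  then show False using Ginvariant_st_nonzero(1)[OF G Xcurve_subset_Xcone[OF C] pC] by auto
qed

text \<open>The closure of a \<open>\<sigma>\<close>-orbit is swept out by two polynomial curves glued along
  \<open>u \<mapsto> 1/u\<close>. For \<open>u \<noteq> 0\<close>, \<open>sigma_arc0 p u\<close> and \<open>sigma_arc_inf p u\<close> represent \<open>\<sigma>\<^bsub>u\<^sup>2\<^esub> p\<close> and
  \<open>\<sigma>\<^bsub>u\<^sup>-\<^sup>2\<^esub> p\<close>; at \<open>u = 0\<close> they are the limits \<open>\<lambda> \<rightarrow> 0\<close> and \<open>\<lambda> \<rightarrow> \<infinity>\<close> of \<open>\<sigma>\<^sub>\<lambda> p\<close>.\<close>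

definition sigma_arc0 :: "pt \<Rightarrow> complex \<Rightarrow> pt" where
  "sigma_arc0 p u = \<lparr>s1 = s1 p, t1 = t1 p, w1 = u\<^sup>2 * w1 p, s2 = u * s2 p, t2 = u * t2 p, w2 = w2 p\<rparr>"

definition sigma_arc_inf :: "pt \<Rightarrow> complex \<Rightarrow> pt" where
  "sigma_arc_inf p u = \<lparr>s1 = u * s1 p, t1 = u * t1 p, w1 = w1 p, s2 = s2 p, t2 = t2 p, w2 = u\<^sup>2 * w2 p\<rparr>"

lemma sigma_arc_sel [simp]:
  "s1 (sigma_arc0 p u) = s1 p" "t1 (sigma_arc0 p u) = t1 p" "w1 (sigma_arc0 p u) = u\<^sup>2 * w1 p"
  "s2 (sigma_arc0 p u) = u * s2 p" "t2 (sigma_arc0 p u) = u * t2 p" "w2 (sigma_arc0 p u) = w2 p"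
  "s1 (sigma_arc_inf p u) = u * s1 p" "t1 (sigma_arc_inf p u) = u * t1 p" "w1 (sigma_arc_inf p u) = w1 p"
  "s2 (sigma_arc_inf p u) = s2 p" "t2 (sigma_arc_inf p u) = t2 p" "w2 (sigma_arc_inf p u) = u\<^sup>2 * w2 p"
  by (simp_all add: sigma_arc0_def sigma_arc_inf_def)

lemma poly_curve_sigma_arc: "poly_curve (sigma_arc0 p)" "poly_curve (sigma_arc_inf p)"
  unfolding poly_curve_def by (simp_all add: poly_fun_intros)

lemma qf_sigma_arc:
  "qf a b c (sigma_arc0 p u) = u\<^sup>2 * qf a b c p" "qf a b c (sigma_arc_inf p u) = u\<^sup>2 * qf a b c p"
  using qf_proportional[of "sigma_arc0 p u" 1 p u] qf_proportional[of "sigma_arc_inf p u" u p 1]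
  by simp_all

lemma sigma_arc_glue: "u \<noteq> 0 \<Longrightarrow> sigma_arc0 p u \<in> orbit (sigma_arc_inf p (1 / u))"
  by (rule orbitI[of _ u u]) (auto intro: pt_eqI simp: power2_eq_square)

lemma sigma_arc_in_invariant:
  assumes G: "Ginvariant C" and C: "saturated C" and p: "p \<in> C" and u: "u \<noteq> 0"
  shows "sigma_arc0 p u \<in> C" "sigma_arc_inf p u \<in> C"
proof -
  have "sigma (u\<^sup>2) p \<in> C" "sigma (inverse (u\<^sup>2)) p \<in> C"
    using Ginvariant_imageD[OF G in_Ggens(4) p] u by simp_all
  moreover have "sigma_arc0 p u = wscale 1 u (sigma (u\<^sup>2) p)"
    and "sigma_arc_inf p u = wscale u 1 (sigma (inverse (u\<^sup>2)) p)"
    using u by (auto intro: pt_eqI)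
  ultimately show "sigma_arc0 p u \<in> C" "sigma_arc_inf p u \<in> C"
    using saturatedD[OF C _ u one_neq_zero] saturatedD[OF C _ one_neq_zero u] by simp_all
qed

lemma Ginvariant_curve_no_sigma_closure:
  assumes C: "Xcurve a b c C" and G: "Ginvariant C" and pC: "p \<in> C"
    and Z: "Xclosed a b c Z" "p \<in> Z" and ratio: "\<And>x. x \<in> Z \<Longrightarrow> s1 x * t1 p = t1 x * s1 p"
    and g: "poly_curve g1" "poly_curve g2" "\<And>u. g1 u \<in> Z" "\<And>u. g2 u \<in> Z"
    and glue: "\<And>u. u \<noteq> 0 \<Longrightarrow> g2 u \<in> orbit (g1 (1 / u))"
    and cover: "\<And>z. z \<in> Z \<Longrightarrow> \<exists>u. z \<in> orbit (g1 u) \<or> z \<in> orbit (g2 u)"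
    and g1C: "\<And>u. u \<noteq> 0 \<Longrightarrow> g1 u \<in> C"
    and new: "g1 0 \<notin> orbit p \<or> g2 0 \<notin> orbit p"
  shows False
proof -
  have Cc: "Xclosed a b c C" by (rule Xcurve_closed[OF C])
  have ZX: "Z \<subseteq> Xcone a b c" by (rule XclosedD(2)[OF Z(1)])
  have all1: "g1 u \<in> C" for u
    by (rule poly_curve_in_Xclosed[OF Cc g(1)]) (use g(3) ZX g1C in auto)
  have all2: "g2 u \<in> C" for u
  proof (rule poly_curve_in_Xclosed[OF Cc g(2)])
    show "g2 u \<in> Xcone a b c" for u using g(4) ZX by blast
    show "g2 u \<in> C" if "u \<noteq> 0" for u
      using glue[OF that] orbit_subset[OF XclosedD(1)[OF Cc] all1] by blast
  qed
  have "Z \<subseteq> C"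
  proof
    fix z assume "z \<in> Z"
    then obtain u where "z \<in> orbit (g1 u) \<or> z \<in> orbit (g2 u)" using cover by blast
    then show "z \<in> C"
      using orbit_subset[OF XclosedD(1)[OF Cc] all1] orbit_subset[OF XclosedD(1)[OF Cc] all2] by blast
  qed
  moreover have "Xirreducible a b c Z"
    by (rule Xirreducible_by_poly_curves[OF Z(1) g glue cover])
  moreover have "\<not> Z \<subseteq> orbit p" using new g(3,4) by blast
  ultimately show False
    using Ginvariant_curve_no_constant_ratio[OF C G pC _ _ Z(2) _ ratio] by blast
qed

lemma sigma_arcs_cover:
  assumes p: "w1 p \<noteq> 0" "w2 p \<noteq> 0" "w1 p * w2 p = qf a b c p" and z: "z \<in> Xcone a b c"
    and la: "s1 z = la * s1 p" "t1 z = la * t1 p" and mu: "s2 z = mu * s2 p" "t2 z = mu * t2 p"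
  shows "\<exists>u. z \<in> orbit (sigma_arc_inf p u) \<or> z \<in> orbit (sigma_arc0 p u)"
proof -
  have qz: "w1 z * w2 z = la\<^sup>2 * mu\<^sup>2 * (w1 p * w2 p)"
    using XconeD[OF z] qf_proportional[OF la mu, of a b c] p(3) by simp
  have nz: "(s1 z, t1 z, w1 z) \<noteq> (0, 0, 0)" "(s2 z, t2 z, w2 z) \<noteq> (0, 0, 0)"
    using XconeD[OF z] by auto
  consider "mu = 0" | "mu \<noteq> 0" "w1 z \<noteq> 0"
  proof (cases "mu = 0 \<or> w1 z \<noteq> 0")
    case False
    then have "la \<noteq> 0" using nz la by auto
    then show ?thesis using False qz p(1,2) by simp
  qed blast+
  then show ?thesis
  proof cases
    case 1
    then have "w2 z \<noteq> 0" using nz mu by auto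
    then have "w1 z = 0" using qz 1 by simp
    then have "la \<noteq> 0" using nz la by auto
    define m where "m = csqrt (w2 z / w2 p)"
    have "m\<^sup>2 * w2 p = w2 z" using p(2) by (simp add: m_def)
    then have "z = wscale la m (sigma_arc0 p 0)" "m \<noteq> 0"
      using la mu 1 \<open>w1 z = 0\<close> \<open>w2 z \<noteq> 0\<close> by (auto intro: pt_eqI)
    then show ?thesis using \<open>la \<noteq> 0\<close> by (blast intro: orbitI)
  next
    case 2
    define l where "l = csqrt (w1 z / w1 p)"
    have l2: "l\<^sup>2 * w1 p = w1 z" using p(1) by (simp add: l_def)
    have "l \<noteq> 0" using l2 2 by auto
    have "w1 z * w2 z = w1 z * (mu\<^sup>2 * (la / l)\<^sup>2 * w2 p)"
      using qz l2 \<open>l \<noteq> 0\<close> by (simp add: field_simps power2_eq_square)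
    then have "w2 z = mu\<^sup>2 * (la / l)\<^sup>2 * w2 p" using 2 by simp
    then have "z = wscale l mu (sigma_arc_inf p (la / l))"
      using la mu l2 \<open>l \<noteq> 0\<close> by (auto intro: pt_eqI)
    then show ?thesis using \<open>l \<noteq> 0\<close> 2 by (blast intro: orbitI)
  qed
qed

lemma sigma_arc_inf_cover:
  assumes p: "w1 p \<noteq> 0" "w2 p = 0" and z: "z \<in> Xcone a b c" "w2 z = 0"
    and la: "s1 z = la * s1 p" "t1 z = la * t1 p" and mu: "s2 z = mu * s2 p" "t2 z = mu * t2 p"
  shows "\<exists>u. z \<in> orbit (sigma_arc_inf p u) \<or> z \<in> orbit (sigma (u\<^sup>2) p)"
proof -
  have nz: "(s1 z, t1 z, w1 z) \<noteq> (0, 0, 0)" "(s2 z, t2 z, w2 z) \<noteq> (0, 0, 0)"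
    using XconeD[OF z(1)] by auto
  then have "mu \<noteq> 0" using mu z(2) by auto
  show ?thesis
  proof (cases "la = 0")
    case True
    then have "w1 z \<noteq> 0" using nz la by auto
    define l where "l = csqrt (w1 z / w1 p)"
    have "l\<^sup>2 * w1 p = w1 z" using p(1) by (simp add: l_def)
    then have "z = wscale l mu (sigma_arc_inf p 0)" "l \<noteq> 0"
      using la mu True z(2) \<open>w1 z \<noteq> 0\<close> by (auto intro: pt_eqI)
    then show ?thesis using \<open>mu \<noteq> 0\<close> by (blast intro: orbitI)
  next
    case False
    define v where "v = csqrt (w1 z / w1 p) / la"
    have "la\<^sup>2 * (v\<^sup>2 * w1 p) = w1 z" using p(1) False by (simp add: v_def power_divide)
    then have "z = wscale la mu (sigma (v\<^sup>2) p)" using la mu z(2) p(2) by (auto intro: pt_eqI)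
    then show ?thesis using False \<open>mu \<noteq> 0\<close> by (blast intro: orbitI)
  qed
qed

lemma sigma_arc0_cover:
  assumes p: "w2 p \<noteq> 0" "w1 p = 0" and z: "z \<in> Xcone a b c" "w1 z = 0"
    and la: "s1 z = la * s1 p" "t1 z = la * t1 p" and mu: "s2 z = mu * s2 p" "t2 z = mu * t2 p"
  shows "\<exists>u. z \<in> orbit (sigma_arc0 p u) \<or> z \<in> orbit (sigma (inverse (u\<^sup>2)) p)"
proof -
  have nz: "(s1 z, t1 z, w1 z) \<noteq> (0, 0, 0)" "(s2 z, t2 z, w2 z) \<noteq> (0, 0, 0)"
    using XconeD[OF z(1)] by auto
  then have "la \<noteq> 0" using la z(2) by auto
  show ?thesis
  proof (cases "mu = 0")
    case True
    then have "w2 z \<noteq> 0" using nz mu by auto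
    define m where "m = csqrt (w2 z / w2 p)"
    have "m\<^sup>2 * w2 p = w2 z" using p(1) by (simp add: m_def)
    then have "z = wscale la m (sigma_arc0 p 0)" "m \<noteq> 0"
      using la mu True z(2) \<open>w2 z \<noteq> 0\<close> by (auto intro: pt_eqI)
    then show ?thesis using \<open>la \<noteq> 0\<close> by (blast intro: orbitI)
  next
    case False
    define v where "v = csqrt (w2 z / w2 p) / mu"
    have "mu\<^sup>2 * (v\<^sup>2 * w2 p) = w2 z" using p(1) False by (simp add: v_def power_divide)
    then have "z = wscale la mu (sigma (inverse (v\<^sup>2)) p)" using la mu z(2) p(2) by (auto intro: pt_eqI)
    then show ?thesis using False \<open>la \<noteq> 0\<close> by (blast intro: orbitI)
  qed
qed

lemma Ginvariant_curve_no_point_w1_w2_nonzero: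
  assumes C: "Xcurve a b c C" and G: "Ginvariant C" and pC: "p \<in> C"
    and w: "w1 p \<noteq> 0" "w2 p \<noteq> 0"
  shows False
proof -
  have pX: "p \<in> Xcone a b c" using pC Xcurve_subset_Xcone[OF C] by blast
  have nz: "(s1 p, t1 p) \<noteq> (0, 0)" "(s2 p, t2 p) \<noteq> (0, 0)"
    using Ginvariant_st_nonzero[OF G Xcurve_subset_Xcone[OF C] pC] by auto
  have qp: "w1 p * w2 p = qf a b c p" using XconeD[OF pX] by simp
  define Z where "Z = Xcone a b c \<inter> {x. s1 x * t1 p - t1 x * s1 p = 0} \<inter> {x. s2 x * t2 p - t2 x * s2 p = 0}"
  have Zc: "Xclosed a b c Z" unfolding Z_def
    by (intro Xclosed_Int_zeros Xclosed_Xcone polyfun_diff pmul ps1 pt1 ps2 pt2 pconst)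
       (simp_all add: mult.assoc flip: right_diff_distrib)
  have arcX: "sigma_arc_inf p u \<in> Xcone a b c" "sigma_arc0 p u \<in> Xcone a b c" for u
    using w nz qp by (auto intro!: XconeI simp: qf_sigma_arc)
  show False
  proof (rule Ginvariant_curve_no_sigma_closure[OF C G pC Zc _ _ poly_curve_sigma_arc(2,1)])
    show "p \<in> Z" using pX by (simp add: Z_def)
    show "sigma_arc_inf p u \<in> Z" "sigma_arc0 p u \<in> Z" for u
      using arcX by (simp_all add: Z_def algebra_simps)
    show "\<exists>u. z \<in> orbit (sigma_arc_inf p u) \<or> z \<in> orbit (sigma_arc0 p u)" if "z \<in> Z" for z
    proof -
      have z: "z \<in> Xcone a b c" "s1 z * t1 p = t1 z * s1 p" "s2 z * t2 p = t2 z * s2 p"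
        using that by (simp_all add: Z_def)
      obtain la mu where "s1 z = la * s1 p" "t1 z = la * t1 p" "s2 z = mu * s2 p" "t2 z = mu * t2 p"
        using proportional_pair[OF nz(1) z(2)] proportional_pair[OF nz(2) z(3)] by blast
      then show ?thesis by (rule sigma_arcs_cover[OF w qp z(1)])
    qed
    show "sigma_arc_inf p u \<in> C" if "u \<noteq> 0" for u
      using sigma_arc_in_invariant[OF G XclosedD(1)[OF Xcurve_closed[OF C]] pC that] by blast
    show "sigma_arc_inf p 0 \<notin> orbit p \<or> sigma_arc0 p 0 \<notin> orbit p"
    proof (rule disjI1, rule notI, elim orbitE)
      fix l m assume "sigma_arc_inf p 0 = wscale l m p" "l \<noteq> 0"
      then have "l * s1 p = 0" "l * t1 p = 0"
        by (metis sigma_arc_sel(7,8) wscale_sel(1,2) mult_zero_left)+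
      then show False using nz(1) \<open>l \<noteq> 0\<close> by simp
    qed
  qed (simp_all add: Z_def sigma_arc_glue)
qed

lemma Ginvariant_curve_no_point_w1_nonzero_w2_zero:
  assumes C: "Xcurve a b c C" and G: "Ginvariant C" and pC: "p \<in> C"
    and w: "w1 p \<noteq> 0" "w2 p = 0"
  shows False
proof -
  have pX: "p \<in> Xcone a b c" using pC Xcurve_subset_Xcone[OF C] by blast
  have nz: "(s1 p, t1 p) \<noteq> (0, 0)" "(s2 p, t2 p) \<noteq> (0, 0)"
    using Ginvariant_st_nonzero[OF G Xcurve_subset_Xcone[OF C] pC] by auto
  have qp: "qf a b c p = 0" using XconeD[OF pX] w(2) by simp
  define Z where "Z = Xcone a b c \<inter> {x. s1 x * t1 p - t1 x * s1 p = 0}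
    \<inter> {x. s2 x * t2 p - t2 x * s2 p = 0} \<inter> {x. w2 x = 0}"
  have Zc: "Xclosed a b c Z" unfolding Z_def
    by (intro Xclosed_Int_zeros Xclosed_Xcone polyfun_diff pmul ps1 pt1 ps2 pt2 pw2 pconst)
       (simp_all add: mult.assoc flip: right_diff_distrib)
  have "poly_curve (\<lambda>u. sigma (u\<^sup>2) p)"
    using w(2) unfolding poly_curve_def by (simp add: poly_fun_intros)
  moreover have "sigma_arc_inf p u \<in> Xcone a b c" "sigma (u\<^sup>2) p \<in> Xcone a b c" for u
    using w nz qp by (auto intro!: XconeI simp: qf_sigma_arc qf_Ggens)
  ultimately show False
  proof (intro Ginvariant_curve_no_sigma_closure[OF C G pC Zc _ _ poly_curve_sigma_arc(2)])
    show "\<exists>u. z \<in> orbit (sigma_arc_inf p u) \<or> z \<in> orbit (sigma (u\<^sup>2) p)" if "z \<in> Z" for z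
    proof -
      have z: "z \<in> Xcone a b c" "s1 z * t1 p = t1 z * s1 p" "s2 z * t2 p = t2 z * s2 p" "w2 z = 0"
        using that by (simp_all add: Z_def)
      obtain la mu where "s1 z = la * s1 p" "t1 z = la * t1 p" "s2 z = mu * s2 p" "t2 z = mu * t2 p"
        using proportional_pair[OF nz(1) z(2)] proportional_pair[OF nz(2) z(3)] by blast
      then show ?thesis by (rule sigma_arc_inf_cover[OF w z(1,4)])
    qed
    show "sigma (u\<^sup>2) p \<in> orbit (sigma_arc_inf p (1 / u))" if "u \<noteq> 0" for u
      using that w(2) by (intro orbitI[of _ u 1]) (auto intro: pt_eqI simp: power2_eq_square)
    show "sigma_arc_inf p u \<in> C" if "u \<noteq> 0" for u
      using sigma_arc_in_invariant[OF G XclosedD(1)[OF Xcurve_closed[OF C]] pC that] by blast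
    show "sigma_arc_inf p 0 \<notin> orbit p \<or> sigma (0\<^sup>2) p \<notin> orbit p"
      using w(1) by (auto elim!: orbitE dest!: arg_cong[of _ _ w1])
  qed (use pX w in \<open>simp_all add: Z_def algebra_simps\<close>)
qed

lemma Ginvariant_curve_no_point_w1_zero_w2_nonzero:
  assumes C: "Xcurve a b c C" and G: "Ginvariant C" and pC: "p \<in> C"
    and w: "w2 p \<noteq> 0" "w1 p = 0"
  shows False
proof -
  have pX: "p \<in> Xcone a b c" using pC Xcurve_subset_Xcone[OF C] by blast
  have nz: "(s1 p, t1 p) \<noteq> (0, 0)" "(s2 p, t2 p) \<noteq> (0, 0)"
    using Ginvariant_st_nonzero[OF G Xcurve_subset_Xcone[OF C] pC] by auto
  have qp: "qf a b c p = 0" using XconeD[OF pX] w(2) by simp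
  define Z where "Z = Xcone a b c \<inter> {x. s1 x * t1 p - t1 x * s1 p = 0}
    \<inter> {x. s2 x * t2 p - t2 x * s2 p = 0} \<inter> {x. w1 x = 0}"
  have Zc: "Xclosed a b c Z" unfolding Z_def
    by (intro Xclosed_Int_zeros Xclosed_Xcone polyfun_diff pmul ps1 pt1 ps2 pt2 pw1 pconst)
       (simp_all add: mult.assoc flip: right_diff_distrib)
  have "poly_curve (\<lambda>u. sigma (inverse (u\<^sup>2)) p)"
    using w(2) unfolding poly_curve_def by (simp add: poly_fun_intros)
  moreover have "sigma_arc0 p u \<in> Xcone a b c" "sigma (inverse (u\<^sup>2)) p \<in> Xcone a b c" for u
    using w nz qp by (auto intro!: XconeI simp: qf_sigma_arc qf_Ggens)
  ultimately show False
  proof (intro Ginvariant_curve_no_sigma_closure[OF C G pC Zc _ _ poly_curve_sigma_arc(1)])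
    show "\<exists>u. z \<in> orbit (sigma_arc0 p u) \<or> z \<in> orbit (sigma (inverse (u\<^sup>2)) p)" if "z \<in> Z" for z
    proof -
      have z: "z \<in> Xcone a b c" "s1 z * t1 p = t1 z * s1 p" "s2 z * t2 p = t2 z * s2 p" "w1 z = 0"
        using that by (simp_all add: Z_def)
      obtain la mu where "s1 z = la * s1 p" "t1 z = la * t1 p" "s2 z = mu * s2 p" "t2 z = mu * t2 p"
        using proportional_pair[OF nz(1) z(2)] proportional_pair[OF nz(2) z(3)] by blast
      then show ?thesis by (rule sigma_arc0_cover[OF w z(1,4)])
    qed
    show "sigma (inverse (u\<^sup>2)) p \<in> orbit (sigma_arc0 p (1 / u))" if "u \<noteq> 0" for u
      using that w(2) by (intro orbitI[of _ 1 u]) (auto intro: pt_eqI simp: power2_eq_square)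
    show "sigma_arc0 p u \<in> C" if "u \<noteq> 0" for u
      using sigma_arc_in_invariant[OF G XclosedD(1)[OF Xcurve_closed[OF C]] pC that] by blast
    show "sigma_arc0 p 0 \<notin> orbit p \<or> sigma (inverse (0\<^sup>2)) p \<notin> orbit p"
      using w(1) by (auto elim!: orbitE dest!: arg_cong[of _ _ w2])
  qed (use pX w in \<open>simp_all add: Z_def algebra_simps\<close>)
qed

theorem Ginvariant_curve_subset_F12:
  assumes C: "Xcurve a b c C" and G: "Ginvariant C"
  shows "C \<subseteq> F12 a b c"
proof
  fix p assume pC: "p \<in> C"
  have pX: "p \<in> Xcone a b c" using pC Xcurve_subset_Xcone[OF C] by blast
  have "w1 p = 0 \<and> w2 p = 0"
    using Ginvariant_curve_no_point_w1_w2_nonzero[OF C G pC] Ginvariant_curve_no_point_w1_nonzero_w2_zero[OF C G pC]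
      Ginvariant_curve_no_point_w1_zero_w2_nonzero[OF C G pC] by blast
  then show "p \<in> F12 a b c" using XconeD[OF pX] pX by (simp add: F12_def)
qed

section \<open>The affine equation of \<open>F\<^sub>1 \<inter> F\<^sub>2\<close>\<close>

text \<open>Bivariate polynomials are encoded as polynomials in \<open>y\<close> with coefficients in \<open>\<complex>[x]\<close>.\<close>

definition eval2 :: "complex poly poly \<Rightarrow> complex \<Rightarrow> complex \<Rightarrow> complex" where
  "eval2 H x y = poly (poly H [:y:]) x"

lemma eval2_add [simp]: "eval2 (H + K) x y = eval2 H x y + eval2 K x y"
  and eval2_mult [simp]: "eval2 (H * K) x y = eval2 H x y * eval2 K x y"
  and eval2_smult [simp]: "eval2 (smult c H) x y = poly c x * eval2 H x y"
  and eval2_X: "eval2 [:[:0, 1:]:] x y = x"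
  and eval2_Y: "eval2 [:0, 1:] x y = y"
  and eval2_const: "eval2 [:c:] x y = poly c x"
  by (simp_all add: eval2_def)

lemma poly_degree_le_1: "degree (R :: 'a::comm_ring_1 poly) \<le> 1 \<Longrightarrow> poly R z = coeff R 0 + z * coeff R 1"
proof -
  assume d: "degree R \<le> 1"
  have "R = [:coeff R 0, coeff R 1:]"
  proof (rule poly_eqI)
    fix n show "coeff R n = coeff [:coeff R 0, coeff R 1:] n"
      using d by (cases n; cases "n - 1") (auto simp: coeff_eq_0 coeff_pCons)
  qed
  then show ?thesis by (metis add.right_neutral mult_zero_right poly_pCons poly_0)
qed

text \<open>With \<open>B = (b + c)/4\<close> and \<open>C = (b - c)/4\<close>, \<open>qchart a B C x y\<close> is \<open>q\<close> in the chart
  \<open>t\<^sub>1 = t\<^sub>2 = 1\<close>, \<open>s\<^sub>1 = x\<close>, \<open>s\<^sub>2 = y\<close> (and also in the chart \<open>s\<^sub>1 = s\<^sub>2 = 1\<close>).\<close>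

definition qchart :: "complex \<Rightarrow> complex \<Rightarrow> complex \<Rightarrow> complex \<Rightarrow> complex \<Rightarrow> complex" where
  "qchart a B C x y = a * x * y + B * (x\<^sup>2 * y\<^sup>2 + 1) + C * (x\<^sup>2 + y\<^sup>2)"

definition qchart_poly :: "complex \<Rightarrow> complex \<Rightarrow> complex \<Rightarrow> complex poly poly" where
  "qchart_poly a B C = [:[:B, 0, C:], [:0, a:], [:C, 0, B:]:]"

lemma eval2_qchart_poly: "eval2 (qchart_poly a B C) x y = qchart a B C x y"
  by (simp add: eval2_def qchart_poly_def qchart_def power2_eq_square algebra_simps)

lemma qchart_sym: "qchart a B C x y = qchart a B C y x"
  by (simp add: qchart_def algebra_simps)

lemma qchart_inverse: "x \<noteq> 0 \<Longrightarrow> y \<noteq> 0 \<Longrightarrow> qchart a B C (1 / x) (1 / y) = qchart a B C x y / (x\<^sup>2 * y\<^sup>2)"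
  by (simp add: qchart_def field_simps power2_eq_square)

lemma qchart_as_poly: "qchart a B C x y = poly [:B + C * x\<^sup>2, a * x, C + B * x\<^sup>2:] y"
  by (simp add: qchart_def power2_eq_square algebra_simps)

text \<open>\<open>(C + B x\<^sup>2)\<^sup>k\<close> is the power of the leading coefficient of \<open>qchart\<close> (in \<open>y\<close>) introduced by
  pseudo-division.\<close>

lemma qchart_pseudo_division:
  assumes C: "C \<noteq> 0"
  shows "\<exists>k D r0 r1. \<forall>x y. (C + B * x\<^sup>2) ^ k * eval2 H x y =
    qchart a B C x y * eval2 D x y + (poly r0 x + y * poly r1 x)"
proof -
  let ?Q = "qchart_poly a B C"
  have Q0: "?Q \<noteq> 0" using C by (simp add: qchart_poly_def)
  have dQ: "degree ?Q = 2" using C by (simp add: qchart_poly_def)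
  have lc: "coeff ?Q (degree ?Q) = [:C, 0, B:]" unfolding dQ by (simp add: qchart_poly_def numeral_2_eq_2)
  obtain D R where pd: "pseudo_divmod H ?Q = (D, R)" by (cases "pseudo_divmod H ?Q") auto
  define k where "k = Suc (degree H) - 2"
  have e: "smult ([:C, 0, B:] ^ k) H = ?Q * D + R"
    using pseudo_divmod(1)[OF Q0 pd] lc dQ by (simp add: k_def)
  have dR: "degree R \<le> 1" using pseudo_divmod(2)[OF Q0 pd] dQ by auto
  have "(C + B * x\<^sup>2) ^ k * eval2 H x y =
      qchart a B C x y * eval2 D x y + (poly (coeff R 0) x + y * poly (coeff R 1) x)" for x y
  proof -
    have "eval2 (smult ([:C, 0, B:] ^ k) H) x y = eval2 (?Q * D + R) x y" using e by simp
    moreover have "eval2 R x y = poly (coeff R 0) x + y * poly (coeff R 1) x"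
      unfolding eval2_def using poly_degree_le_1[OF dR, of "[:y:]"] by (simp add: algebra_simps)
    moreover have "poly ([:C, 0, B:] ^ k) x = (C + B * x\<^sup>2) ^ k"
      by (simp add: poly_power power2_eq_square algebra_simps)
    ultimately show ?thesis by (simp only: eval2_smult eval2_add eval2_mult eval2_qchart_poly)
  qed
  then show ?thesis by blast
qed

text \<open>The discriminant of \<open>qchart\<close> as a quadratic in \<open>y\<close>.\<close>

definition qchart_disc :: "complex \<Rightarrow> complex \<Rightarrow> complex \<Rightarrow> complex poly" where
  "qchart_disc a B C = [:-4 * B * C, 0, a\<^sup>2 - 4 * B\<^sup>2 - 4 * C\<^sup>2, 0, -4 * B * C:]"

lemma poly_qchart_disc: "poly (qchart_disc a B C) x = (a * x)\<^sup>2 - 4 * (C + B * x\<^sup>2) * (B + C * x\<^sup>2)"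
  by (simp add: qchart_disc_def power2_eq_square algebra_simps)

lemma poly_pderiv_qchart_disc:
  "poly (pderiv (qchart_disc a B C)) x = 2 * x * ((a\<^sup>2 - 4 * B\<^sup>2 - 4 * C\<^sup>2) - 8 * B * C * x\<^sup>2)"
  by (simp add: qchart_disc_def pderiv_pCons power2_eq_square algebra_simps)

lemma quadratic_root: "(al :: complex) \<noteq> 0 \<Longrightarrow> \<exists>y. al * y\<^sup>2 + be * y + ga = 0"
proof -
  assume al: "al \<noteq> 0"
  define s where "s = csqrt (be\<^sup>2 - 4 * al * ga)"
  have s2: "s\<^sup>2 = be\<^sup>2 - 4 * al * ga" by (simp add: s_def)
  define y where "y = (- be + s) / (2 * al)"
  have "(al * y\<^sup>2 + be * y + ga) * (4 * al) = s\<^sup>2 - be\<^sup>2 + 4 * al * ga"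
    using al by (simp add: y_def field_simps power2_eq_square)
  then show ?thesis using s2 al by (intro exI[of _ y]) simp
qed

text \<open>For \<open>B = (b + c)/4\<close>, \<open>C = (b - c)/4\<close> these assumptions say \<open>(a\<^sup>2 - b\<^sup>2)(a\<^sup>2 - c\<^sup>2)(b\<^sup>2 - c\<^sup>2) \<noteq> 0\<close>.\<close>

locale smooth_qchart =
  fixes a B C :: complex
  assumes B_nz: "B \<noteq> 0" and C_nz: "C \<noteq> 0"
    and plus: "a\<^sup>2 \<noteq> 4 * (B + C)\<^sup>2" and minus: "a\<^sup>2 \<noteq> 4 * (B - C)\<^sup>2"
begin

lemma disc_simple_root: "\<exists>x0. poly (qchart_disc a B C) x0 = 0 \<and> poly (pderiv (qchart_disc a B C)) x0 \<noteq> 0"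
proof -
  define D where "D = a\<^sup>2 - 4 * B\<^sup>2 - 4 * C\<^sup>2"
  define s where "s = csqrt (D\<^sup>2 - 64 * B\<^sup>2 * C\<^sup>2)"
  define z where "z = (D + s) / (8 * B * C)"
  have BC: "B * C \<noteq> 0" using B_nz C_nz by simp
  have s2: "s\<^sup>2 = D\<^sup>2 - 64 * B\<^sup>2 * C\<^sup>2" by (simp add: s_def)
  have qz: "4 * B * C * z\<^sup>2 - D * z + 4 * B * C = 0"
  proof -
    have "(4 * B * C * z\<^sup>2 - D * z + 4 * B * C) * (16 * B * C) = (D + s)\<^sup>2 - 2 * D * (D + s) + 64 * B\<^sup>2 * C\<^sup>2"
      using BC by (simp add: z_def field_simps power2_eq_square)
    also have "\<dots> = s\<^sup>2 - D\<^sup>2 + 64 * B\<^sup>2 * C\<^sup>2" by (simp add: power2_eq_square algebra_simps)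
    also have "\<dots> = 0" using s2 by simp
    finally show ?thesis using BC by simp
  qed
  define x0 where "x0 = csqrt z"
  have x02: "x0\<^sup>2 = z" by (simp add: x0_def)
  have x00: "x0 \<noteq> 0" using x02 qz BC by auto
  have "poly (qchart_disc a B C) x0 = - (4 * B * C * z\<^sup>2 - D * z + 4 * B * C)"
    unfolding poly_qchart_disc using x02 by (simp add: D_def power2_eq_square algebra_simps)
  then have root: "poly (qchart_disc a B C) x0 = 0" using qz by simp
  have "D - 8 * B * C * z \<noteq> 0"
  proof
    assume e: "D - 8 * B * C * z = 0"
    then have "4 * B * C * (z\<^sup>2 - 1) = 0" using qz by (simp add: power2_eq_square algebra_simps)
    then have "z\<^sup>2 = 1" using BC by simp
    then have "(D - 8 * B * C) * (D + 8 * B * C) = 0" using e by (simp add: power2_eq_square algebra_simps)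
    moreover have "D - 8 * B * C = a\<^sup>2 - 4 * (B + C)\<^sup>2" "D + 8 * B * C = a\<^sup>2 - 4 * (B - C)\<^sup>2"
      by (simp_all add: D_def power2_eq_square algebra_simps)
    ultimately show False using plus minus by simp
  qed
  then have "poly (pderiv (qchart_disc a B C)) x0 \<noteq> 0"
    unfolding poly_pderiv_qchart_disc using x02 x00 by (simp add: D_def)
  then show ?thesis using root by blast
qed

lemma disc_not_square:
  assumes e: "P * P = qchart_disc a B C * (S * S)" and S: "S \<noteq> 0"
  shows False
proof -
  obtain x0 where r: "poly (qchart_disc a B C) x0 = 0" and nd: "poly (pderiv (qchart_disc a B C)) x0 \<noteq> 0"
    using disc_simple_root by blast
  have D0: "qchart_disc a B C \<noteq> 0" using r nd by auto
  have "order x0 (qchart_disc a B C) = 1" using order_pderiv[OF D0 r] order_0I[OF nd] by simp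
  moreover have nz: "qchart_disc a B C * (S * S) \<noteq> 0" using D0 S by simp
  ultimately have "order x0 (P * P) = 1 + (order x0 S + order x0 S)"
    using e order_mult[OF nz] order_mult[of S S x0] S by simp
  moreover have "order x0 (P * P) = order x0 P + order x0 P" using nz e by (intro order_mult) simp
  ultimately show False by presburger
qed

text \<open>If \<open>r\<^sub>0(x) + y r\<^sub>1(x)\<close> vanishes on the conic \<open>qchart = 0\<close>, then \<open>y = -r\<^sub>0/r\<^sub>1\<close> would be a
  root of the quadratic and its discriminant a square; so \<open>r\<^sub>0 = r\<^sub>1 = 0\<close>.\<close>

lemma linear_remainder_zero:
  assumes M: "\<And>x. poly ([:C, 0, B:] * r0 * r0 - [:0, a:] * r0 * r1 + [:B, 0, C:] * r1 * r1) x = 0"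
  shows "r0 = 0 \<and> r1 = 0"
proof (cases "r1 = 0")
  case True
  have "poly ([:C, 0, B:] * (r0 * r0)) x = 0" for x using M[of x] True by (simp add: algebra_simps)
  then have "[:C, 0, B:] * (r0 * r0) = 0" using poly_eq_poly_eq_iff[of "[:C, 0, B:] * (r0 * r0)" 0] by auto
  moreover have "[:C, 0, B:] \<noteq> 0" using C_nz by simp
  ultimately have "r0 * r0 = 0" using no_zero_divisors by blast
  then show ?thesis using True by simp
next
  case False
  define P where "P = smult 2 ([:C, 0, B:] * r0) - [:0, a:] * r1"
  have "P * P = qchart_disc a B C * (r1 * r1)"
  proof (rule iffD1[OF poly_eq_poly_eq_iff], rule ext)
    fix x
    have m: "(C + B * x\<^sup>2) * poly r0 x * poly r0 x - a * x * poly r0 x * poly r1 x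
        + (B + C * x\<^sup>2) * poly r1 x * poly r1 x = 0"
      using M[of x] by (simp add: power2_eq_square algebra_simps)
    have "poly (P * P) x - poly (qchart_disc a B C * (r1 * r1)) x =
       4 * (C + B * x\<^sup>2) * ((C + B * x\<^sup>2) * poly r0 x * poly r0 x - a * x * poly r0 x * poly r1 x
         + (B + C * x\<^sup>2) * poly r1 x * poly r1 x)"
      by (simp add: P_def poly_qchart_disc power2_eq_square algebra_simps)
    then show "poly (P * P) x = poly (qchart_disc a B C * (r1 * r1)) x" using m by simp
  qed
  then show ?thesis using disc_not_square False by blast
qed

lemma finite_qchart_fiber: "finite {y. qchart a B C x y = 0}"
proof -
  have "[:B + C * x\<^sup>2, a * x, C + B * x\<^sup>2:] \<noteq> 0"
  proof
    assume "[:B + C * x\<^sup>2, a * x, C + B * x\<^sup>2:] = 0"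
    then have e: "B + C * x\<^sup>2 = 0" "a * x = 0" "C + B * x\<^sup>2 = 0" by auto
    then have "x \<noteq> 0" using C_nz by auto
    then have a0: "a = 0" using e(2) by simp
    have c: "C = - (B * x\<^sup>2)" using e(3) by (simp add: eq_neg_iff_add_eq_0)
    have "B = - (C * x\<^sup>2)" using e(1) by (simp add: eq_neg_iff_add_eq_0)
    also have "\<dots> = B * (x\<^sup>2)\<^sup>2" using c by (simp add: power2_eq_square)
    finally have "B = B * (x\<^sup>2)\<^sup>2" .
    then have x4: "(x\<^sup>2)\<^sup>2 = 1" using B_nz by simp
    have "C\<^sup>2 = B\<^sup>2 * (x\<^sup>2)\<^sup>2" using c by (simp add: power_mult_distrib)
    then have "(C - B) * (C + B) = 0" using x4 by (simp add: power2_eq_square algebra_simps)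
    then have "C = B \<or> C = - B" by (auto simp: add_eq_0_iff)
    then show False using plus minus a0 by auto
  qed
  then show ?thesis unfolding qchart_as_poly by (rule poly_roots_finite)
qed

lemma vanishes_on_qchart:
  assumes inf: "infinite {(x, y). qchart a B C x y = 0 \<and> eval2 H x y = 0}"
    and xy: "qchart a B C x y = 0" "C + B * x\<^sup>2 \<noteq> 0"
  shows "eval2 H x y = 0"
proof -
  obtain k D r0 r1 where pd: "\<And>x y. (C + B * x\<^sup>2) ^ k * eval2 H x y =
      qchart a B C x y * eval2 D x y + (poly r0 x + y * poly r1 x)"
    using qchart_pseudo_division[OF C_nz, of B H a] by blast
  define S where "S = {(x, y). qchart a B C x y = 0 \<and> eval2 H x y = 0}"
  have "infinite (fst ` S)"
  proof
    assume "finite (fst ` S)"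
    then have "finite (Sigma (fst ` S) (\<lambda>x. {y. qchart a B C x y = 0}))"
      using finite_qchart_fiber by blast
    moreover have "S \<subseteq> Sigma (fst ` S) (\<lambda>x. {y. qchart a B C x y = 0})"
      unfolding S_def by force
    ultimately show False using inf finite_subset unfolding S_def by blast
  qed
  moreover have "finite {x. poly [:C, 0, B:] x = 0}" using C_nz by (intro poly_roots_finite) auto
  ultimately have inf2: "infinite (fst ` S - {x. poly [:C, 0, B:] x = 0})"
    by (rule Diff_infinite_finite[rotated])
  define M where "M = [:C, 0, B:] * r0 * r0 - [:0, a:] * r0 * r1 + [:B, 0, C:] * r1 * r1"
  have "fst ` S - {x. poly [:C, 0, B:] x = 0} \<subseteq> {x. poly M x = 0}"
  proof
    fix x assume "x \<in> fst ` S - {x. poly [:C, 0, B:] x = 0}"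
    then obtain y where xy: "qchart a B C x y = 0" "eval2 H x y = 0" unfolding S_def by auto
    have r: "poly r0 x = - y * poly r1 x" using pd[of x y] xy by (simp add: eq_neg_iff_add_eq_0)
    have "poly M x = (poly r1 x)\<^sup>2 * qchart a B C x y"
      unfolding M_def qchart_def using r by (simp add: power2_eq_square algebra_simps)
    then show "x \<in> {x. poly M x = 0}" using xy by simp
  qed
  then have "M = 0" using inf2 finite_subset poly_roots_finite by blast
  then have "r0 = 0 \<and> r1 = 0" using linear_remainder_zero[of r0 r1] unfolding M_def by simp
  then show ?thesis using pd[of x y] xy by simp
qed

lemma infinite_qchart_zeros:
  "infinite {(x, y). qchart a B C x y = 0 \<and> x \<noteq> 0 \<and> y \<noteq> 0 \<and> C + B * (1 / x)\<^sup>2 \<noteq> 0}"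
    (is "infinite ?W")
proof -
  define F where "F = {0} \<union> {x. poly [:C, 0, B:] x = 0} \<union> {x. poly [:B, 0, C:] x = 0}"
  have "finite {x. poly [:C, 0, B:] x = 0}" using C_nz by (intro poly_roots_finite) auto
  moreover have "finite {x. poly [:B, 0, C:] x = 0}" using B_nz by (intro poly_roots_finite) auto
  ultimately have "finite F" unfolding F_def by blast
  have "- F \<subseteq> fst ` ?W"
  proof
    fix x assume "x \<in> - F"
    then have x0: "x \<noteq> 0" and a1: "C + B * x\<^sup>2 \<noteq> 0" and a2: "B + C * x\<^sup>2 \<noteq> 0"
      by (auto simp: F_def power2_eq_square algebra_simps)
    have "B + C * x\<^sup>2 = (C + B * (1 / x)\<^sup>2) * x\<^sup>2" using x0 by (simp add: field_simps power2_eq_square)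
    then have a3: "C + B * (1 / x)\<^sup>2 \<noteq> 0" using a2 by auto
    obtain y where y: "(C + B * x\<^sup>2) * y\<^sup>2 + (a * x) * y + (B + C * x\<^sup>2) = 0"
      using quadratic_root[OF a1] by blast
    then have "qchart a B C x y = 0" by (simp add: qchart_def power2_eq_square algebra_simps)
    moreover have "y \<noteq> 0" using y a2 by auto
    ultimately show "x \<in> fst ` ?W" using x0 a3 by (intro image_eqI[where x = "(x, y)"]) simp_all
  qed
  moreover have "infinite (- F)" using \<open>finite F\<close> by (simp add: infinite_UNIV_char_0)
  ultimately show ?thesis using finite_subset finite_imageI by blast
qed

lemma qchart_leading_coeffs_not_all_zero:
  assumes ex: "C + B * x\<^sup>2 = 0" and ey: "C + B * y\<^sup>2 = 0" and ei: "C + B * (1 / x)\<^sup>2 = 0"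
    and q: "qchart a B C x y = 0"
  shows False
proof -
  have x0: "x \<noteq> 0" and y0: "y \<noteq> 0" using ex ey C_nz by auto
  define k where "k = x\<^sup>2"
  have k1: "B * k = - C" using ex by (simp add: k_def eq_neg_iff_add_eq_0 add.commute)
  have "C * k + B = (C + B * (1 / x)\<^sup>2) * x\<^sup>2" using x0 by (simp add: k_def field_simps power2_eq_square)
  then have k2: "C * k = - B" using ei by (simp add: eq_neg_iff_add_eq_0)
  have "B * y\<^sup>2 = B * x\<^sup>2" using ex ey by (metis add_left_cancel)
  then have yk: "y\<^sup>2 = k" using B_nz by (simp add: k_def)
  have "B * k * k = B" using k1 k2 by (metis minus_mult_left mult.commute mult.assoc minus_minus)
  then have kk: "k * k = 1" using B_nz by (simp add: mult.assoc)
  have "qchart a B C x y = a * x * y + B * (k * k + 1) + C * (k + k)"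
    using yk by (simp add: qchart_def k_def power2_eq_square)
  also have "\<dots> = a * x * y + 2 * (B + C * k)" using kk by (simp add: algebra_simps)
  also have "\<dots> = a * x * y" using k2 by simp
  finally have "a = 0" using q x0 y0 by simp
  have "(k - 1) * (k + 1) = 0" using kk by (simp add: algebra_simps)
  then have "k = 1 \<or> k = -1" by (auto simp: eq_neg_iff_add_eq_0)
  then show False using k1 plus minus \<open>a = 0\<close> by auto
qed

end

section \<open>\<open>F\<^sub>1 \<inter> F\<^sub>2\<close> is an irreducible curve\<close>

definition poly2 :: "(complex \<Rightarrow> complex \<Rightarrow> complex) \<Rightarrow> bool" where
  "poly2 g \<longleftrightarrow> (\<exists>H. \<forall>x y. g x y = eval2 H x y)"

lemma poly2_const: "poly2 (\<lambda>x y. c)"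
  unfolding poly2_def by (rule exI[of _ "[:[:c:]:]"]) (simp add: eval2_const)

lemma poly2_X: "poly2 (\<lambda>x y. x)"
  unfolding poly2_def by (rule exI[of _ "[:[:0, 1:]:]"]) (simp add: eval2_X)

lemma poly2_Y: "poly2 (\<lambda>x y. y)"
  unfolding poly2_def by (rule exI[of _ "[:0, 1:]"]) (simp add: eval2_Y)

lemma poly2_add: "poly2 f \<Longrightarrow> poly2 g \<Longrightarrow> poly2 (\<lambda>x y. f x y + g x y)"
  unfolding poly2_def by (metis eval2_add)

lemma poly2_mult: "poly2 f \<Longrightarrow> poly2 g \<Longrightarrow> poly2 (\<lambda>x y. f x y * g x y)"
  unfolding poly2_def by (metis eval2_mult)

definition poly_map2 :: "(complex \<Rightarrow> complex \<Rightarrow> pt) \<Rightarrow> bool" where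
  "poly_map2 e \<longleftrightarrow>
     poly2 (\<lambda>x y. s1 (e x y)) \<and> poly2 (\<lambda>x y. t1 (e x y)) \<and> poly2 (\<lambda>x y. w1 (e x y)) \<and>
     poly2 (\<lambda>x y. s2 (e x y)) \<and> poly2 (\<lambda>x y. t2 (e x y)) \<and> poly2 (\<lambda>x y. w2 (e x y))"

lemma poly_map2_polyfun:
  assumes "f \<in> polyfun" "poly_map2 e"
  shows "poly2 (\<lambda>x y. f (e x y))"
  using assms(1)
proof induction
  case (pconst c) then show ?case by (rule poly2_const)
next
  case (padd f1 f2) show ?case by (rule poly2_add[OF padd.IH])
next
  case (pmul f1 f2) show ?case by (rule poly2_mult[OF pmul.IH])
qed (use assms(2) in \<open>simp_all add: poly_map2_def\<close>)

definition chart_t :: "complex \<Rightarrow> complex \<Rightarrow> pt" where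
  "chart_t x y = \<lparr>s1 = x, t1 = 1, w1 = 0, s2 = y, t2 = 1, w2 = 0\<rparr>"

definition chart_s :: "complex \<Rightarrow> complex \<Rightarrow> pt" where
  "chart_s x y = \<lparr>s1 = 1, t1 = x, w1 = 0, s2 = 1, t2 = y, w2 = 0\<rparr>"

lemma poly_map2_charts:
  "poly_map2 chart_t" "poly_map2 (\<lambda>x y. chart_t y x)"
  "poly_map2 chart_s" "poly_map2 (\<lambda>x y. chart_s y x)"
  unfolding poly_map2_def chart_t_def chart_s_def by (simp_all add: poly2_X poly2_Y poly2_const)

lemma charts_glue:
  assumes "x \<noteq> 0" "y \<noteq> 0"
  shows "chart_s x y \<in> orbit (chart_t (1 / x) (1 / y))" "chart_t x y \<in> orbit (chart_s (1 / x) (1 / y))"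
  using assms by (auto intro!: orbitI[of _ x y] pt_eqI simp: chart_t_def chart_s_def)

lemma wscale_chart_t:
  "t1 p \<noteq> 0 \<Longrightarrow> t2 p \<noteq> 0 \<Longrightarrow> w1 p = 0 \<Longrightarrow> w2 p = 0 \<Longrightarrow>
   p = wscale (t1 p) (t2 p) (chart_t (s1 p / t1 p) (s2 p / t2 p))"
  by (rule pt_eqI) (simp_all add: chart_t_def)

lemma wscale_chart_s:
  "s1 p \<noteq> 0 \<Longrightarrow> s2 p \<noteq> 0 \<Longrightarrow> w1 p = 0 \<Longrightarrow> w2 p = 0 \<Longrightarrow>
   p = wscale (s1 p) (s2 p) (chart_s (t1 p / s1 p) (t2 p / s2 p))"
  by (rule pt_eqI) (simp_all add: chart_s_def)

lemma F12_iff: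
  "x \<in> F12 a b c \<longleftrightarrow>
     (s1 x, t1 x) \<noteq> (0, 0) \<and> (s2 x, t2 x) \<noteq> (0, 0) \<and> w1 x = 0 \<and> w2 x = 0 \<and> qf a b c x = 0"
  by (auto simp: F12_def Xcone_def)

lemma F12_subset_Xcone: "F12 a b c \<subseteq> Xcone a b c"
  by (auto simp: F12_def)

lemma F12_Xclosed: "Xclosed a b c (F12 a b c)"
proof -
  have "F12 a b c = Xcone a b c \<inter> {x. qf a b c x = 0} \<inter> {x. w1 x = 0} \<inter> {x. w2 x = 0}"
    by (auto simp: F12_def)
  moreover have "Xclosed a b c (Xcone a b c \<inter> {x. qf a b c x = 0} \<inter> {x. w1 x = 0} \<inter> {x. w2 x = 0})"
    by (intro Xclosed_Int_zeros Xclosed_Xcone qf_polyfun pw1 pw2) (simp_all add: qf_wscale)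
  ultimately show ?thesis by simp
qed

locale smooth_X = smooth_qchart a B C for a B C +
  fixes b c :: complex
  assumes B_eq: "B = (b + c) / 4" and C_eq: "C = (b - c) / 4"
begin

lemma qf_charts: "qf a b c (chart_t x y) = qchart a B C x y" "qf a b c (chart_s x y) = qchart a B C x y"
  by (simp_all add: qf_def qchart_def chart_t_def chart_s_def B_eq C_eq algebra_simps)

lemma charts_in_F12:
  "chart_t x y \<in> F12 a b c \<longleftrightarrow> qchart a B C x y = 0"
  "chart_s x y \<in> F12 a b c \<longleftrightarrow> qchart a B C x y = 0"
  by (auto simp: F12_def Xcone_def qf_charts simp del: qf_def) (simp_all add: chart_t_def chart_s_def)

text \<open>Charts are parametrised by the conic \<open>qchart = 0\<close>, so the irreducibility of the conic transfers to
  closed sets: exchanging \<open>x\<close> and \<open>y\<close> if needed, the leading coefficient \<open>C + B x\<^sup>2\<close> is nonzero.\<close>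

lemma chart_in_Xclosed:
  assumes e: "poly_map2 e" "poly_map2 (\<lambda>x y. e y x)"
    and eF: "\<And>x y. e x y \<in> F12 a b c \<longleftrightarrow> qchart a B C x y = 0"
    and A: "Xclosed a b c A" and inf: "infinite {(x, y). qchart a B C x y = 0 \<and> e x y \<in> A}"
    and q: "qchart a B C x y = 0" and lead: "C + B * x\<^sup>2 \<noteq> 0 \<or> C + B * y\<^sup>2 \<noteq> 0"
  shows "e x y \<in> A"
proof -
  obtain P where P: "P \<subseteq> polyfun" "A = {p \<in> Xcone a b c. \<forall>f\<in>P. f p = 0}" using A by (rule XclosedE)
  have "f (e x y) = 0" if fP: "f \<in> P" for f
  proof -
    have f: "f \<in> polyfun" using fP P by blast
    have van: "qchart a B C u v = 0 \<Longrightarrow> e u v \<in> A \<Longrightarrow> f (e u v) = 0" for u v using fP P by blast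
    show ?thesis
    proof (cases "C + B * x\<^sup>2 \<noteq> 0")
      case True
      obtain H where H: "\<And>u v. f (e u v) = eval2 H u v"
        using poly_map2_polyfun[OF f e(1)] unfolding poly2_def by blast
      have "{(x, y). qchart a B C x y = 0 \<and> e x y \<in> A} \<subseteq> {(x, y). qchart a B C x y = 0 \<and> eval2 H x y = 0}"
        using van H by auto
      then have "infinite {(x, y). qchart a B C x y = 0 \<and> eval2 H x y = 0}" using inf finite_subset by blast
      then show ?thesis using vanishes_on_qchart[OF _ q True] H by simp
    next
      case False
      then have lead_y: "C + B * y\<^sup>2 \<noteq> 0" using lead by blast
      obtain H where H: "\<And>u v. f (e v u) = eval2 H u v"
        using poly_map2_polyfun[OF f e(2)] unfolding poly2_def by blast
      let ?S = "{(x, y). qchart a B C x y = 0 \<and> e x y \<in> A}"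
      have "prod.swap ` ?S \<subseteq> {(x, y). qchart a B C x y = 0 \<and> eval2 H x y = 0}"
        using van H qchart_sym by auto
      moreover have "infinite (prod.swap ` ?S)"
        using inf finite_imageD[of prod.swap ?S] inj_on_def[of prod.swap ?S] by auto
      ultimately have "infinite {(x, y). qchart a B C x y = 0 \<and> eval2 H x y = 0}"
        using finite_subset by blast
      moreover have "qchart a B C y x = 0" using q qchart_sym by metis
      ultimately have "eval2 H y x = 0" using vanishes_on_qchart[OF _ _ lead_y] by blast
      then show ?thesis using H by simp
    qed
  qed
  moreover have "e x y \<in> Xcone a b c" using eF[of x y] q F12_subset_Xcone by blast
  ultimately show ?thesis using P by blast
qed

lemma charts_in_Xclosed:
  assumes e: "poly_map2 e" "poly_map2 (\<lambda>x y. e y x)" and e': "poly_map2 e'" "poly_map2 (\<lambda>x y. e' y x)"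
    and eF: "\<And>x y. e x y \<in> F12 a b c \<longleftrightarrow> qchart a B C x y = 0"
    and eF': "\<And>x y. e' x y \<in> F12 a b c \<longleftrightarrow> qchart a B C x y = 0"
    and glue: "\<And>x y. x \<noteq> 0 \<Longrightarrow> y \<noteq> 0 \<Longrightarrow> e' x y \<in> orbit (e (1 / x) (1 / y))"
    and A: "Xclosed a b c A" and inf: "infinite {(x, y). qchart a B C x y = 0 \<and> e x y \<in> A}"
    and q: "qchart a B C x y = 0" and lead: "C + B * x\<^sup>2 \<noteq> 0 \<or> C + B * y\<^sup>2 \<noteq> 0"
  shows "e x y \<in> A \<and> e' x y \<in> A"
proof
  note in_A = chart_in_Xclosed[OF e eF A inf]
  show "e x y \<in> A" by (rule in_A[OF q lead])
  have "{(x, y). qchart a B C x y = 0 \<and> x \<noteq> 0 \<and> y \<noteq> 0 \<and> C + B * (1 / x)\<^sup>2 \<noteq> 0}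
      \<subseteq> {(x, y). qchart a B C x y = 0 \<and> e' x y \<in> A}"
  proof safe
    fix u v assume uv: "qchart a B C u v = 0" "u \<noteq> 0" "v \<noteq> 0" "C + B * (1 / u)\<^sup>2 \<noteq> 0"
    have "qchart a B C (1 / u) (1 / v) = 0" using qchart_inverse[OF uv(2,3)] uv(1) by simp
    then have "e (1 / u) (1 / v) \<in> A" using in_A uv(4) by blast
    then show "e' u v \<in> A" using glue[OF uv(2,3)] orbit_subset[OF XclosedD(1)[OF A]] by blast
  qed
  then have "infinite {(x, y). qchart a B C x y = 0 \<and> e' x y \<in> A}"
    using infinite_qchart_zeros finite_subset by blast
  then show "e' x y \<in> A" by (rule chart_in_Xclosed[OF e' eF' A _ q lead])
qed

lemma F12_t_zero_imp_s_nonzero: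
  assumes p: "p \<in> F12 a b c" and t: "t1 p = 0 \<or> t2 p = 0"
  shows "s1 p \<noteq> 0 \<and> s2 p \<noteq> 0"
proof -
  have n: "(s1 p, t1 p) \<noteq> (0, 0)" "(s2 p, t2 p) \<noteq> (0, 0)" and qp: "qf a b c p = 0"
    using p by (auto simp: F12_iff)
  have qfp: "qf a b c p = a * s1 p * t1 p * s2 p * t2 p + B * ((s1 p)\<^sup>2 * (s2 p)\<^sup>2 + (t1 p)\<^sup>2 * (t2 p)\<^sup>2)
    + C * ((s1 p)\<^sup>2 * (t2 p)\<^sup>2 + (t1 p)\<^sup>2 * (s2 p)\<^sup>2)" by (simp add: qf_def B_eq C_eq)
  show ?thesis
  proof (intro conjI notI)
    assume "s1 p = 0"
    then have "t1 p \<noteq> 0" "t2 p = 0" "s2 p \<noteq> 0" using t n by auto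
    then show False using qp qfp \<open>s1 p = 0\<close> C_nz by simp
  next
    assume "s2 p = 0"
    then have "t2 p \<noteq> 0" "t1 p = 0" "s1 p \<noteq> 0" using t n by auto
    then show False using qp qfp \<open>s2 p = 0\<close> C_nz by simp
  qed
qed

lemma F12_chart_cover:
  assumes p: "p \<in> F12 a b c"
  shows "\<exists>x y. qchart a B C x y = 0 \<and> (C + B * x\<^sup>2 \<noteq> 0 \<or> C + B * y\<^sup>2 \<noteq> 0) \<and>
    (p \<in> orbit (chart_t x y) \<or> p \<in> orbit (chart_s x y))"
proof -
  have w: "w1 p = 0" "w2 p = 0" and qp: "qf a b c p = 0" using p by (auto simp: F12_def)
  show ?thesis
  proof (cases "t1 p \<noteq> 0 \<and> t2 p \<noteq> 0")
    case True
    define x where "x = s1 p / t1 p"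
    define y where "y = s2 p / t2 p"
    have pe: "p = wscale (t1 p) (t2 p) (chart_t x y)"
      unfolding x_def y_def by (rule wscale_chart_t) (use True w in auto)
    then have po: "p \<in> orbit (chart_t x y)" using True by (blast intro: orbitI)
    have q: "qchart a B C x y = 0" using qp True qf_wscale[of a b c "t1 p" "t2 p" "chart_t x y"]
      by (simp flip: pe add: qf_charts)
    show ?thesis
    proof (cases "C + B * x\<^sup>2 \<noteq> 0 \<or> C + B * y\<^sup>2 \<noteq> 0")
      case True then show ?thesis using q po by blast
    next
      case False
      then have ex: "C + B * x\<^sup>2 = 0" and ey: "C + B * y\<^sup>2 = 0" by auto
      have x0: "x \<noteq> 0" and y0: "y \<noteq> 0" using ex ey C_nz by auto
      have "qchart a B C (1 / x) (1 / y) = 0" using qchart_inverse[OF x0 y0] q by simp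
      moreover have "C + B * (1 / x)\<^sup>2 \<noteq> 0" using qchart_leading_coeffs_not_all_zero[OF ex ey _ q] by blast
      moreover have "p \<in> orbit (chart_s (1 / x) (1 / y))" using orbit_trans[OF po charts_glue(2)[OF x0 y0]] .
      ultimately show ?thesis by blast
    qed
  next
    case False
    then have s: "s1 p \<noteq> 0" "s2 p \<noteq> 0" using F12_t_zero_imp_s_nonzero[OF p] by auto
    define x where "x = t1 p / s1 p"
    define y where "y = t2 p / s2 p"
    have pe: "p = wscale (s1 p) (s2 p) (chart_s x y)"
      unfolding x_def y_def by (rule wscale_chart_s) (use s w in auto)
    then have po: "p \<in> orbit (chart_s x y)" using s by (blast intro: orbitI)
    have q: "qchart a B C x y = 0" using qp s qf_wscale[of a b c "s1 p" "s2 p" "chart_s x y"]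
      by (simp flip: pe add: qf_charts)
    have "x = 0 \<or> y = 0" using False by (auto simp: x_def y_def)
    then have "C + B * x\<^sup>2 \<noteq> 0 \<or> C + B * y\<^sup>2 \<noteq> 0" using C_nz by auto
    then show ?thesis using q po by blast
  qed
qed

lemma F12_subset_Xclosed:
  assumes A: "Xclosed a b c A"
    and inf: "infinite {(x, y). qchart a B C x y = 0 \<and> chart_t x y \<in> A}
      \<or> infinite {(x, y). qchart a B C x y = 0 \<and> chart_s x y \<in> A}"
  shows "F12 a b c \<subseteq> A"
proof
  fix p assume "p \<in> F12 a b c"
  then obtain x y where xy: "qchart a B C x y = 0" "C + B * x\<^sup>2 \<noteq> 0 \<or> C + B * y\<^sup>2 \<noteq> 0"
    and p: "p \<in> orbit (chart_t x y) \<or> p \<in> orbit (chart_s x y)"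
    using F12_chart_cover by blast
  have "chart_t x y \<in> A \<and> chart_s x y \<in> A"
    using inf
  proof
    assume "infinite {(x, y). qchart a B C x y = 0 \<and> chart_t x y \<in> A}"
    then show ?thesis
      using charts_in_Xclosed[OF poly_map2_charts charts_in_F12 charts_glue(1) A _ xy] by blast
  next
    assume "infinite {(x, y). qchart a B C x y = 0 \<and> chart_s x y \<in> A}"
    then show ?thesis
      using charts_in_Xclosed[OF poly_map2_charts(3,4,1,2) charts_in_F12(2,1) charts_glue(2) A _ xy]
      by blast
  qed
  then show "p \<in> A" using p orbit_subset[OF XclosedD(1)[OF A]] by blast
qed

lemma infinite_chart_t_F12: "infinite {(x, y). qchart a B C x y = 0 \<and> chart_t x y \<in> F12 a b c}"
  by (rule infinite_super[OF _ infinite_qchart_zeros]) (auto simp: charts_in_F12)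

lemma F12_Xirreducible: "Xirreducible a b c (F12 a b c)"
  unfolding Xirreducible_def
proof (intro conjI allI impI)
  show "Xclosed a b c (F12 a b c)" by (rule F12_Xclosed)
  obtain x y where "(x, y) \<in> {(x, y). qchart a B C x y = 0 \<and> chart_t x y \<in> F12 a b c}"
    using infinite_imp_nonempty[OF infinite_chart_t_F12] by auto
  then show "F12 a b c \<noteq> {}" by blast
  fix A A' assume A: "Xclosed a b c A" and A': "Xclosed a b c A'" and e: "F12 a b c = A \<union> A'"
  have "{(x, y). qchart a B C x y = 0 \<and> chart_t x y \<in> F12 a b c}
      = {(x, y). qchart a B C x y = 0 \<and> chart_t x y \<in> A} \<union> {(x, y). qchart a B C x y = 0 \<and> chart_t x y \<in> A'}"
    unfolding e by auto
  then have "infinite {(x, y). qchart a B C x y = 0 \<and> chart_t x y \<in> A}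
      \<or> infinite {(x, y). qchart a B C x y = 0 \<and> chart_t x y \<in> A'}"
    using infinite_chart_t_F12 by auto
  then have "F12 a b c \<subseteq> A \<or> F12 a b c \<subseteq> A'"
    using F12_subset_Xclosed[OF A] F12_subset_Xclosed[OF A'] by blast
  then show "F12 a b c = A \<or> F12 a b c = A'" using e by blast
qed

text \<open>A proper closed subset of \<open>F\<^sub>1 \<inter> F\<^sub>2\<close> meets each chart in finitely many points, hence is a
  finite union of points.\<close>

lemma proper_Xclosed_subset_F12:
  assumes A: "Xclosed a b c A" "A \<subset> F12 a b c"
  shows "\<exists>S. finite S \<and> S \<subseteq> Xcone a b c \<and> A \<subseteq> (\<Union>e\<in>S. orbit e)"
proof -
  define Tt where "Tt = {(x, y). qchart a B C x y = 0 \<and> chart_t x y \<in> A}"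
  define Ts where "Ts = {(x, y). qchart a B C x y = 0 \<and> chart_s x y \<in> A}"
  have "finite Tt" "finite Ts" using F12_subset_Xclosed[OF A(1)] A(2) unfolding Tt_def Ts_def by blast+
  define S where "S = (\<lambda>(x, y). chart_t x y) ` Tt \<union> (\<lambda>(x, y). chart_s x y) ` Ts"
  have "finite S" using \<open>finite Tt\<close> \<open>finite Ts\<close> unfolding S_def by simp
  moreover have "S \<subseteq> Xcone a b c"
    unfolding S_def Tt_def Ts_def using charts_in_F12 F12_subset_Xcone[of a b c] by auto
  moreover have "A \<subseteq> (\<Union>e\<in>S. orbit e)"
  proof
    fix p assume pA: "p \<in> A"
    then obtain x y where xy: "qchart a B C x y = 0"
      and "p \<in> orbit (chart_t x y) \<or> p \<in> orbit (chart_s x y)" using F12_chart_cover A(2) by blast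
    moreover have "orbit p \<subseteq> A" using orbit_subset[OF XclosedD(1)[OF A(1)] pA] .
    ultimately have "chart_t x y \<in> A \<and> p \<in> orbit (chart_t x y) \<or> chart_s x y \<in> A \<and> p \<in> orbit (chart_s x y)"
      using orbit_sym by blast
    moreover have "chart_t x y \<in> A \<Longrightarrow> chart_t x y \<in> S" "chart_s x y \<in> A \<Longrightarrow> chart_s x y \<in> S"
      using xy unfolding S_def Tt_def Ts_def by (auto intro: image_eqI[where x = "(x, y)"])
    ultimately show "p \<in> (\<Union>e\<in>S. orbit e)" by blast
  qed
  ultimately show ?thesis by blast
qed

theorem F12_Xcurve: "Xcurve a b c (F12 a b c)"
proof -
  obtain x0 y0 where "(x0, y0) \<in> {(x, y). qchart a B C x y = 0 \<and> chart_t x y \<in> F12 a b c}"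
    using infinite_imp_nonempty[OF infinite_chart_t_F12] by auto
  then have e0: "chart_t x0 y0 \<in> F12 a b c" by simp
  have "orbit (chart_t x0 y0) \<subseteq> F12 a b c"
    using orbit_subset[OF XclosedD(1)[OF F12_Xclosed] e0] .
  moreover have "orbit (chart_t x0 y0) \<noteq> F12 a b c"
  proof
    assume e: "orbit (chart_t x0 y0) = F12 a b c"
    have "{(x, y). qchart a B C x y = 0 \<and> chart_t x y \<in> orbit (chart_t x0 y0)} \<subseteq> {(x0, y0)}"
    proof (clarsimp elim!: orbitE)
      fix x y l m assume "chart_t x y = wscale l m (chart_t x0 y0)"
      then have "t1 (chart_t x y) = t1 (wscale l m (chart_t x0 y0))" "t2 (chart_t x y) = t2 (wscale l m (chart_t x0 y0))"
        "s1 (chart_t x y) = s1 (wscale l m (chart_t x0 y0))" "s2 (chart_t x y) = s2 (wscale l m (chart_t x0 y0))"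
        by simp_all
      then show "x = x0 \<and> y = y0" by (simp add: chart_t_def)
    qed
    then show False using infinite_chart_t_F12 finite_subset unfolding e by blast
  qed
  moreover have "Xirreducible a b c (orbit (chart_t x0 y0))"
    using orbit_Xirreducible e0 F12_subset_Xcone by blast
  moreover have False if Z: "Xirreducible a b c Z1" "Xirreducible a b c Z2" "Z1 \<subset> Z2" "Z2 \<subset> F12 a b c" for Z1 Z2
  proof -
    obtain S where S: "finite S" "S \<subseteq> Xcone a b c" "Z2 \<subseteq> (\<Union>e\<in>S. orbit e)"
      using proper_Xclosed_subset_F12[OF XirreducibleD(1)[OF Z(2)] Z(4)] by blast
    then obtain e where "Z2 = orbit e" using Xirreducible_subset_UN_orbits[OF S(1,2) Z(2)] by blast
    then have "Z1 = orbit e"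
      using saturated_subset_orbit_eq XclosedD(1)[OF XirreducibleD(1)[OF Z(1)]] XirreducibleD(2)[OF Z(1)] Z(3)
      by blast
    then show False using Z(3) \<open>Z2 = orbit e\<close> by simp
  qed
  ultimately show ?thesis unfolding Xcurve_def using F12_Xirreducible by blast
qed

end

section \<open>The invariant curves\<close>

lemma image_involution_eq: "(\<And>x. g (g x) = x) \<Longrightarrow> (\<And>x. x \<in> F \<Longrightarrow> g x \<in> F) \<Longrightarrow> g ` F = F"
  by (metis image_subset_iff subsetI subset_antisym imageI)

lemma Ggens_image_F12:
  assumes "g \<in> Ggens"
  shows "g ` F12 a b c = F12 a b c"
proof -
  consider "g = tau1" | "g = tau2" | "g = tau3" | l where "g = sigma l" using assms unfolding Ggens_def by blast
  then show ?thesis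
  proof cases
    case 4
    have "sigma l x = x" if "x \<in> F12 a b c" for x
      by (rule pt_eqI) (use that in \<open>simp_all add: F12_iff\<close>)
    then show ?thesis using 4 by force
  qed (intro image_involution_eq; auto intro: pt_eqI simp: F12_iff qf_Ggens)+
qed

lemma F12_Ginvariant: "Ginvariant (F12 a b c)"
  unfolding Ginvariant_def
proof
  fix g assume "g \<in> Gset"
  then show "g ` F12 a b c = F12 a b c"
  proof induction
    case Gid then show ?case by simp
  next
    case (Gstep g h)
    have "(g \<circ> h) ` F12 a b c = g ` (h ` F12 a b c)" by (rule image_comp[symmetric])
    then show ?case using Ggens_image_F12[OF Gstep.hyps(1)] Gstep.IH by simp
  qed
qed

lemma Ginvariant_Xirreducible_in_both:
  assumes C: "Xirreducible a b c C" and G: "Ginvariant C" and g: "g \<in> Ggens"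
    and f: "f1 \<in> polyfun" "f2 \<in> polyfun"
    and hom1: "\<And>x l m. f1 x = 0 \<Longrightarrow> l \<noteq> 0 \<Longrightarrow> m \<noteq> 0 \<Longrightarrow> f1 (wscale l m x) = 0"
    and hom2: "\<And>x l m. f2 x = 0 \<Longrightarrow> l \<noteq> 0 \<Longrightarrow> m \<noteq> 0 \<Longrightarrow> f2 (wscale l m x) = 0"
    and cover: "\<And>x. x \<in> C \<Longrightarrow> f1 x = 0 \<or> f2 x = 0"
    and swap1: "\<And>x. f1 (g x) = 0 \<Longrightarrow> f2 x = 0" and swap2: "\<And>x. f2 (g x) = 0 \<Longrightarrow> f1 x = 0"
    and x: "x \<in> C"
  shows "f1 x = 0 \<and> f2 x = 0"
proof -
  have Cc: "Xclosed a b c C" by (rule XirreducibleD(1)[OF C])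
  have "C = (C \<inter> {x. f1 x = 0}) \<union> (C \<inter> {x. f2 x = 0})" using cover by auto
  then have "C \<subseteq> {x. f1 x = 0} \<or> C \<subseteq> {x. f2 x = 0}"
    using XirreducibleD(3)[OF C Xclosed_Int_zeros[OF Cc f(1) hom1] Xclosed_Int_zeros[OF Cc f(2) hom2]]
    by blast
  moreover have "g x \<in> C" by (rule Ginvariant_imageD[OF G g x])
  ultimately show ?thesis using x swap1 swap2 by blast
qed

text \<open>If \<open>q = B P\<^sup>2 + K R\<^sup>2\<close> then \<open>q\<close> factors into \<open>P \<plusminus> k R\<close>, and \<open>\<tau>\<^sub>3\<close> exchanges the factors because it
  fixes \<open>P = s\<^sub>1 s\<^sub>2 + \<epsilon> t\<^sub>1 t\<^sub>2\<close> and negates \<open>R = s\<^sub>1 t\<^sub>2 + \<delta> t\<^sub>1 s\<^sub>2\<close>.\<close>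

lemma Ginvariant_sum_of_squares_terms_vanish:
  fixes eps del B K :: complex
  assumes C: "Xirreducible a b c C" and G: "Ginvariant C" and CF: "C \<subseteq> F12 a b c"
    and B: "B \<noteq> 0" and K: "K \<noteq> 0"
    and q: "\<And>x. qf a b c x = B * (s1 x * s2 x + eps * t1 x * t2 x)\<^sup>2 + K * (s1 x * t2 x + del * t1 x * s2 x)\<^sup>2"
    and x: "x \<in> C"
  shows "s1 x * s2 x + eps * t1 x * t2 x = 0 \<and> s1 x * t2 x + del * t1 x * s2 x = 0"
proof -
  define k where "k = csqrt (- K / B)"
  have Bk: "B * k\<^sup>2 = - K" using B by (simp add: k_def)
  have k0: "k \<noteq> 0" using Bk K by auto
  define P where "P x = s1 x * s2 x + eps * t1 x * t2 x" for x :: pt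
  define R where "R x = s1 x * t2 x + del * t1 x * s2 x" for x :: pt
  have f: "(\<lambda>x. P x - k * R x) \<in> polyfun" "(\<lambda>x. P x + k * R x) \<in> polyfun"
    unfolding P_def R_def by (intro polyfun_diff padd pmul pconst ps1 pt1 ps2 pt2)+
  have hom: "P (wscale l m x) - k * R (wscale l m x) = l * m * (P x - k * R x)"
    "P (wscale l m x) + k * R (wscale l m x) = l * m * (P x + k * R x)" for l m x
    by (simp_all add: P_def R_def algebra_simps)
  have tau3: "P (tau3 x) - k * R (tau3 x) = P x + k * R x" "P (tau3 x) + k * R (tau3 x) = P x - k * R x" for x
    by (simp_all add: P_def R_def algebra_simps)
  have cover: "P x - k * R x = 0 \<or> P x + k * R x = 0" if "x \<in> C" for x
  proof -
    have "B * ((P x - k * R x) * (P x + k * R x)) = B * (P x)\<^sup>2 - (B * k\<^sup>2) * (R x)\<^sup>2"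
      by (simp add: power2_eq_square algebra_simps)
    also have "\<dots> = qf a b c x" using Bk q[of x] by (simp add: P_def R_def)
    also have "\<dots> = 0" using that CF by (auto simp: F12_def)
    finally show ?thesis using B by simp
  qed
  have "P x - k * R x = 0 \<and> P x + k * R x = 0"
    by (rule Ginvariant_Xirreducible_in_both[OF C G in_Ggens(3) f _ _ cover _ _ x])
       (simp_all only: hom tau3, simp_all)
  then have "P x = 0 \<and> R x = 0" using k0 by (auto simp: algebra_simps)
  then show ?thesis by (simp add: P_def R_def)
qed

lemma square_ratio_if_terms_vanish:
  fixes s t s' t' eps del :: complex
  assumes n: "(s, t) \<noteq> (0, 0)" "(s', t') \<noteq> (0, 0)" and ed: "eps \<noteq> 0" "del \<noteq> 0"
    and p: "s * s' + eps * t * t' = 0" and r: "s * t' + del * t * s' = 0"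
  shows "s\<^sup>2 = eps * del * t\<^sup>2"
proof -
  have "s' \<noteq> 0"
  proof
    assume "s' = 0"
    then have "t' \<noteq> 0" using n(2) by auto
    then have "s = 0" "t = 0" using p r \<open>s' = 0\<close> ed(1) by simp_all
    then show False using n(1) by simp
  qed
  moreover have "t' \<noteq> 0"
  proof
    assume "t' = 0"
    then have "s = 0" "t = 0" using p r \<open>s' \<noteq> 0\<close> ed(2) by simp_all
    then show False using n(1) by simp
  qed
  moreover have "s * s' = - (eps * t * t')" "s * t' = - (del * t * s')"
    using p r by (simp_all add: eq_neg_iff_add_eq_0)
  then have "(s * s') * (s * t') = (eps * t * t') * (del * t * s')" by simp
  then have "(s\<^sup>2 - eps * del * t\<^sup>2) * (s' * t') = 0" by (simp add: power2_eq_square algebra_simps)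
  ultimately show ?thesis by simp
qed

text \<open>On an invariant curve inside \<open>F\<^sub>1 \<inter> F\<^sub>2\<close> the vanishing of \<open>P\<close> and \<open>R\<close> forces
  \<open>s\<^sub>1\<^sup>2 = \<epsilon>\<delta> t\<^sub>1\<^sup>2\<close>, whose two factors \<open>s\<^sub>1 \<plusminus> \<rho> t\<^sub>1\<close> are again exchanged by \<open>\<tau>\<^sub>3\<close>.\<close>

lemma no_Ginvariant_curve_sum_of_squares:
  fixes eps del B K :: complex
  assumes C: "Xirreducible a b c C" and G: "Ginvariant C" and CF: "C \<subseteq> F12 a b c"
    and e: "eps\<^sup>2 = 1" and d: "del\<^sup>2 = 1" and B: "B \<noteq> 0" and K: "K \<noteq> 0"
    and q: "\<And>x. qf a b c x = B * (s1 x * s2 x + eps * t1 x * t2 x)\<^sup>2 + K * (s1 x * t2 x + del * t1 x * s2 x)\<^sup>2"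
  shows False
proof -
  have ed: "eps \<noteq> 0" "del \<noteq> 0" using e d by auto
  have sq: "(s1 y)\<^sup>2 = eps * del * (t1 y)\<^sup>2" if "y \<in> C" for y
    using Ginvariant_sum_of_squares_terms_vanish[OF C G CF B K q that] that CF
    by (intro square_ratio_if_terms_vanish[OF _ _ ed, of "s1 y" "t1 y" "s2 y" "t2 y"]) (auto simp: F12_iff)
  define rho where "rho = csqrt (eps * del)"
  have rho2: "rho\<^sup>2 = eps * del" by (simp add: rho_def)
  have rho0: "rho \<noteq> 0" using rho2 ed by auto
  have cover: "s1 y - rho * t1 y = 0 \<or> s1 y + rho * t1 y = 0" if "y \<in> C" for y
  proof -
    have "(s1 y - rho * t1 y) * (s1 y + rho * t1 y) = (s1 y)\<^sup>2 - rho\<^sup>2 * (t1 y)\<^sup>2"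
      by (simp add: power2_eq_square algebra_simps)
    then show ?thesis using sq[OF that] rho2 by simp
  qed
  have g: "(\<lambda>x. s1 x - rho * t1 x) \<in> polyfun" "(\<lambda>x. s1 x + rho * t1 x) \<in> polyfun"
    by (intro polyfun_diff padd pmul pconst ps1 pt1)+
  have hom: "s1 (wscale l m y) - rho * t1 (wscale l m y) = l * (s1 y - rho * t1 y)"
    "s1 (wscale l m y) + rho * t1 (wscale l m y) = l * (s1 y + rho * t1 y)" for l m y
    by (simp_all add: algebra_simps)
  obtain x where x: "x \<in> C" using XirreducibleD(2)[OF C] by blast
  have "s1 x - rho * t1 x = 0 \<and> s1 x + rho * t1 x = 0"
    by (rule Ginvariant_Xirreducible_in_both[OF C G in_Ggens(3) g _ _ cover _ _ x])
       (simp_all only: hom, simp_all)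
  then have "s1 x = 0" "t1 x = 0" using rho0 by (auto simp: algebra_simps)
  moreover have "(s1 x, t1 x) \<noteq> (0, 0)" using x CF by (auto simp: F12_iff)
  ultimately show False by simp
qed

text \<open>\<open>\<tau>\<^sub>2\<close> exchanges the two factors of \<open>q\<close>, so \<open>U = V = 0\<close> on \<open>C\<close>; this forces \<open>s\<^sub>1 t\<^sub>1 = 0\<close>, whose
  factors are again exchanged by \<open>\<tau>\<^sub>2\<close>.\<close>

lemma no_Ginvariant_curve_split_quadric:
  fixes U V :: "pt \<Rightarrow> complex" and r1 r2 \<kappa> :: complex
  assumes C: "Xirreducible a b c C" and G: "Ginvariant C" and CF: "C \<subseteq> F12 a b c"
    and UV: "U \<in> polyfun" "V \<in> polyfun"
    and hom: "\<And>l m x. U (wscale l m x) = l * m * U x" "\<And>l m x. V (wscale l m x) = l * m * V x"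
    and tau2: "\<And>x. U (tau2 x) = V x" "\<And>x. V (tau2 x) = U x"
    and q: "\<And>x. qf a b c x = \<kappa> * ((U x - r1 * V x) * (U x - r2 * V x))"
    and r: "r1 * r2 = 1" "r1 \<noteq> r2" and \<kappa>: "\<kappa> \<noteq> 0"
    and UV0: "\<And>x. (s1 x, t1 x) \<noteq> (0, 0) \<Longrightarrow> (s2 x, t2 x) \<noteq> (0, 0) \<Longrightarrow> U x = 0 \<Longrightarrow> V x = 0
      \<Longrightarrow> s1 x = 0 \<or> t1 x = 0"
  shows False
proof -
  have f: "(\<lambda>x. U x - r1 * V x) \<in> polyfun" "(\<lambda>x. U x - r2 * V x) \<in> polyfun"
    by (intro polyfun_diff pmul pconst UV)+
  have homf: "U (wscale l m x) - r1 * V (wscale l m x) = l * m * (U x - r1 * V x)"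
    "U (wscale l m x) - r2 * V (wscale l m x) = l * m * (U x - r2 * V x)" for l m x
    by (simp_all add: hom algebra_simps)
  have swap: "U (tau2 x) - r1 * V (tau2 x) = - r1 * (U x - r2 * V x)"
    "U (tau2 x) - r2 * V (tau2 x) = - r2 * (U x - r1 * V x)" for x
    using r(1) by (simp_all add: tau2 algebra_simps)
  have r0: "r1 \<noteq> 0" "r2 \<noteq> 0" using r(1) by auto
  have cover: "U x - r1 * V x = 0 \<or> U x - r2 * V x = 0" if "x \<in> C" for x
    using that CF q[of x] \<kappa> by (auto simp: F12_def)
  have st: "s1 x = 0 \<or> t1 x = 0" if "x \<in> C" for x
  proof -
    have "U x - r1 * V x = 0 \<and> U x - r2 * V x = 0"
      by (rule Ginvariant_Xirreducible_in_both[OF C G in_Ggens(2) f _ _ cover _ _ that])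
         (simp_all only: homf swap, simp_all add: r0)
    then have "V x = 0" "U x = 0" using r(2) by (auto simp: algebra_simps)
    moreover have "(s1 x, t1 x) \<noteq> (0, 0)" "(s2 x, t2 x) \<noteq> (0, 0)" using that CF by (auto simp: F12_iff)
    ultimately show ?thesis using UV0 by blast
  qed
  obtain x where x: "x \<in> C" using XirreducibleD(2)[OF C] by blast
  have "s1 x = 0 \<and> t1 x = 0"
    by (rule Ginvariant_Xirreducible_in_both[OF C G in_Ggens(2) ps1 pt1 _ _ st _ _ x]) simp_all
  moreover have "(s1 x, t1 x) \<noteq> (0, 0)" using x CF by (auto simp: F12_iff)
  ultimately show False by simp
qed

lemma qf_sum_of_squares:
  assumes "eps\<^sup>2 = 1" "del\<^sup>2 = 1" "a = eps * (b + c) / 2 + del * (b - c) / 2"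
  shows "qf a b c x = (b + c) / 4 * (s1 x * s2 x + eps * t1 x * t2 x)\<^sup>2
    + (b - c) / 4 * (s1 x * t2 x + del * t1 x * s2 x)\<^sup>2"
proof -
  have "(b + c) / 4 * (s1 x * s2 x + eps * t1 x * t2 x)\<^sup>2 + (b - c) / 4 * (s1 x * t2 x + del * t1 x * s2 x)\<^sup>2
    = (eps * (b + c) / 2 + del * (b - c) / 2) * s1 x * t1 x * s2 x * t2 x
      + (b + c) / 4 * ((s1 x)\<^sup>2 * (s2 x)\<^sup>2 + eps\<^sup>2 * (t1 x)\<^sup>2 * (t2 x)\<^sup>2)
      + (b - c) / 4 * ((s1 x)\<^sup>2 * (t2 x)\<^sup>2 + del\<^sup>2 * (t1 x)\<^sup>2 * (s2 x)\<^sup>2)"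
    by (simp add: power2_eq_square field_simps)
  then show ?thesis using assms by (simp add: qf_def)
qed

lemma no_Ginvariant_curve_sum_of_squares_param:
  assumes C: "Xcurve a b c C" and G: "Ginvariant C"
    and e: "eps\<^sup>2 = 1" and d: "del\<^sup>2 = 1" and a: "a = eps * (b + c) / 2 + del * (b - c) / 2"
    and bc: "b + c \<noteq> 0" "b - c \<noteq> 0"
  shows False
  using no_Ginvariant_curve_sum_of_squares[OF XcurveD(1)[OF C] G Ginvariant_curve_subset_F12[OF C G]
      e d _ _ qf_sum_of_squares[OF e d a]] bc
  by simp

lemma binary_form_factors:
  fixes a b :: complex
  assumes b0: "b \<noteq> 0" and ab: "a\<^sup>2 \<noteq> b\<^sup>2"
  shows "\<exists>r1 r2. r1 * r2 = 1 \<and> r1 \<noteq> r2 \<and>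
    (\<forall>u v. b / 2 * ((u - r1 * v) * (u - r2 * v)) = a * u * v + b / 2 * (u\<^sup>2 + v\<^sup>2))"
proof -
  define sq where "sq = csqrt (a\<^sup>2 - b\<^sup>2)"
  have sq2: "sq\<^sup>2 = a\<^sup>2 - b\<^sup>2" by (simp add: sq_def)
  have sq0: "sq \<noteq> 0" using sq2 ab by auto
  define r1 where "r1 = (- a + sq) / b"
  define r2 where "r2 = (- a - sq) / b"
  have "r1 * r2 = (a\<^sup>2 - sq\<^sup>2) / b\<^sup>2" using b0 by (simp add: r1_def r2_def field_simps power2_eq_square)
  then have r12: "r1 * r2 = 1" using sq2 b0 by simp
  have rs: "r1 + r2 = - 2 * a / b" using b0 by (simp add: r1_def r2_def field_simps)
  have "b / 2 * ((u - r1 * v) * (u - r2 * v)) = a * u * v + b / 2 * (u\<^sup>2 + v\<^sup>2)" for u v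
  proof -
    have "b / 2 * ((u - r1 * v) * (u - r2 * v)) = b / 2 * (u\<^sup>2 - (r1 + r2) * u * v + (r1 * r2) * v\<^sup>2)"
      by (simp add: power2_eq_square algebra_simps)
    also have "\<dots> = a * u * v + b / 2 * (u\<^sup>2 + v\<^sup>2)" using b0 by (simp add: rs r12 field_simps power2_eq_square)
    finally show ?thesis .
  qed
  moreover have "r1 \<noteq> r2" using sq0 b0 by (simp add: r1_def r2_def field_simps)
  ultimately show ?thesis using r12 by blast
qed

text \<open>For \<open>c = \<plusminus>b\<close> the quadric \<open>q\<close> is the binary quadratic form \<open>a U V + b/2 (U\<^sup>2 + V\<^sup>2)\<close> in
  \<open>U = s\<^sub>1 s\<^sub>2, V = t\<^sub>1 t\<^sub>2\<close> (resp. \<open>U = s\<^sub>1 t\<^sub>2, V = t\<^sub>1 s\<^sub>2\<close>), with roots \<open>r\<^sub>1 r\<^sub>2 = 1\<close>.\<close>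

lemma no_Ginvariant_curve_c_eq_pm_b:
  assumes C: "Xcurve a b c C" and G: "Ginvariant C"
    and bc: "c = b \<or> c = - b" and b0: "b \<noteq> 0" and ab: "a\<^sup>2 \<noteq> b\<^sup>2"
  shows False
proof -
  have Ci: "Xirreducible a b c C" and CF: "C \<subseteq> F12 a b c"
    using XcurveD(1)[OF C] Ginvariant_curve_subset_F12[OF C G] .
  obtain r1 r2 where r12: "r1 * r2 = 1" and rne: "r1 \<noteq> r2"
    and fac: "\<And>u v. b / 2 * ((u - r1 * v) * (u - r2 * v)) = a * u * v + b / 2 * (u\<^sup>2 + v\<^sup>2)"
    using binary_form_factors[OF b0 ab] by blast
  have \<kappa>: "b / 2 \<noteq> 0" using b0 by simp
  from bc show False
  proof
    assume cb: "c = b"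
    show False
    proof (rule no_Ginvariant_curve_split_quadric[OF Ci G CF _ _ _ _ _ _ _ r12 rne \<kappa>,
          of "\<lambda>x. s1 x * s2 x" "\<lambda>x. t1 x * t2 x"])
      show "qf a b c x = b / 2 * ((s1 x * s2 x - r1 * (t1 x * t2 x)) * (s1 x * s2 x - r2 * (t1 x * t2 x)))" for x
        unfolding fac by (simp add: qf_def cb power2_eq_square algebra_simps)
    qed (auto intro: pmul ps1 ps2 pt1 pt2 simp: algebra_simps)
  next
    assume cb: "c = - b"
    show False
    proof (rule no_Ginvariant_curve_split_quadric[OF Ci G CF _ _ _ _ _ _ _ r12 rne \<kappa>,
          of "\<lambda>x. s1 x * t2 x" "\<lambda>x. t1 x * s2 x"])
      show "qf a b c x = b / 2 * ((s1 x * t2 x - r1 * (t1 x * s2 x)) * (s1 x * t2 x - r2 * (t1 x * s2 x)))" for x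
        unfolding fac by (simp add: qf_def cb power2_eq_square algebra_simps)
    qed (auto intro: pmul ps1 ps2 pt1 pt2 simp: algebra_simps)
  qed
qed

definition admissible :: "complex \<Rightarrow> complex \<Rightarrow> complex \<Rightarrow> bool" where
  "admissible a b c \<longleftrightarrow> (a, b, c) \<noteq> (0, 0, 0) \<and>
     (\<forall>e1 e2 :: complex. e1 \<in> {1, -1} \<longrightarrow> e2 \<in> {1, -1} \<longrightarrow> \<not> proj_eq (a, b, c) (1, e1, e2)) \<and>
     \<not> proj_eq (a, b, c) (1, 0, 0) \<and> \<not> proj_eq (a, b, c) (0, 1, 0) \<and> \<not> proj_eq (a, b, c) (0, 0, 1)"

lemma admissible_not_proportional:
  assumes adm: "admissible a b c" and k: "k \<noteq> 0" "a = k * x" "b = k * y" "c = k * z"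
    and xyz: "(x, y, z) \<in> {(1, 0, 0), (0, 1, 0), (0, 0, 1)} \<or> (x = 1 \<and> y\<^sup>2 = 1 \<and> z\<^sup>2 = 1)"
  shows False
proof -
  have pe: "proj_eq (a, b, c) (x, y, z)" using k unfolding proj_eq_def by auto
  from xyz show False
  proof
    assume "(x, y, z) \<in> {(1, 0, 0), (0, 1, 0), (0, 0, 1)}"
    then show False using pe adm unfolding admissible_def by auto
  next
    assume xyz: "x = 1 \<and> y\<^sup>2 = 1 \<and> z\<^sup>2 = 1"
    then have yz: "y \<in> {1, -1}" "z \<in> {1, -1}" by (auto simp: power2_eq_1_iff)
    have "\<forall>e1 e2 :: complex. e1 \<in> {1, -1} \<longrightarrow> e2 \<in> {1, -1} \<longrightarrow> \<not> proj_eq (a, b, c) (1, e1, e2)"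
      using adm unfolding admissible_def by (elim conjE)
    then show False using pe xyz yz by blast
  qed
qed

lemma admissible_nonzero: "admissible a b c \<Longrightarrow> (a, b, c) \<noteq> (0, 0, 0)"
  by (simp add: admissible_def)

lemma admissible_b_eq_pm_c:
  assumes adm: "admissible a b c" and bc: "b\<^sup>2 = c\<^sup>2"
  shows "b \<noteq> 0" "a\<^sup>2 \<noteq> b\<^sup>2"
proof -
  have c: "c = b \<or> c = - b" using bc by (auto simp: power2_eq_iff)
  show b0: "b \<noteq> 0"
  proof
    assume "b = 0"
    then have "c = 0" "a \<noteq> 0" using c admissible_nonzero[OF adm] by auto
    then show False by (intro admissible_not_proportional[OF adm \<open>a \<noteq> 0\<close>, of 1 0 0]) (simp_all add: \<open>b = 0\<close>)
  qed
  show "a\<^sup>2 \<noteq> b\<^sup>2"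
  proof
    assume ab: "a\<^sup>2 = b\<^sup>2"
    then have "a \<noteq> 0" using b0 by auto
    moreover have "(b / a)\<^sup>2 = 1" using ab b0 by (simp add: power_divide)
    moreover have "c \<noteq> 0" using c b0 by auto
    then have "(c / a)\<^sup>2 = 1" using ab bc by (simp add: power_divide)
    ultimately show False by (intro admissible_not_proportional[OF adm \<open>a \<noteq> 0\<close>, of 1 "b / a" "c / a"]) simp_all
  qed
qed

lemma sum_of_squares_params:
  fixes a b c :: complex
  assumes "a\<^sup>2 = b\<^sup>2 \<or> a\<^sup>2 = c\<^sup>2"
  shows "\<exists>eps del :: complex. eps\<^sup>2 = 1 \<and> del\<^sup>2 = 1 \<and> a = eps * (b + c) / 2 + del * (b - c) / 2"
  using assms
proof (elim disjE)
  assume "a\<^sup>2 = b\<^sup>2"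
  then have "a = 1 * (b + c) / 2 + 1 * (b - c) / 2 \<or> a = -1 * (b + c) / 2 + -1 * (b - c) / 2"
    by (auto simp: power2_eq_iff field_simps)
  then show ?thesis by (metis power_one power2_minus)
next
  assume "a\<^sup>2 = c\<^sup>2"
  then have "a = 1 * (b + c) / 2 + -1 * (b - c) / 2 \<or> a = -1 * (b + c) / 2 + 1 * (b - c) / 2"
    by (auto simp: power2_eq_iff field_simps)
  then show ?thesis by (metis power_one power2_minus)
qed

lemma admissible_sum_of_squares:
  assumes adm: "admissible a b c" and bc: "b\<^sup>2 \<noteq> c\<^sup>2"
    and ed: "eps\<^sup>2 = 1" "del\<^sup>2 = 1" "a = eps * (b + c) / 2 + del * (b - c) / 2"
  shows "b + c \<noteq> 0" "b - c \<noteq> 0"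
proof -
  have b0: "b \<noteq> 0" if "a = k * b" for k
  proof
    assume "b = 0"
    then have "a = 0" "c \<noteq> 0" using that bc by simp_all
    then show False by (intro admissible_not_proportional[OF adm \<open>c \<noteq> 0\<close>, of 0 0 1]) (simp_all add: \<open>b = 0\<close>)
  qed
  show "b + c \<noteq> 0"
  proof
    assume "b + c = 0"
    then have c: "c = - b" by (simp add: add.commute eq_neg_iff_add_eq_0)
    then have a: "a = del * b" using ed(3) by (simp add: field_simps)
    have "del * b \<noteq> 0" "a = (del * b) * 1" "b = (del * b) * del" "c = (del * b) * (- del)"
      using ed(2) c a b0[OF a] by (auto simp: power2_eq_square)
    then show False by (rule admissible_not_proportional[OF adm]) (simp add: ed(2))
  qed
  show "b - c \<noteq> 0"
  proof
    assume "b - c = 0"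
    then have c: "c = b" by simp
    then have a: "a = eps * b" using ed(3) by (simp add: field_simps)
    have "eps * b \<noteq> 0" "a = (eps * b) * 1" "b = (eps * b) * eps" "c = (eps * b) * eps"
      using ed(1) c a b0[OF a] by (auto simp: power2_eq_square)
    then show False by (rule admissible_not_proportional[OF adm]) (simp add: ed(1))
  qed
qed

lemma degenerate_parameters:
  assumes adm: "admissible a b c" and deg: "(a\<^sup>2 - b\<^sup>2) * (a\<^sup>2 - c\<^sup>2) * (b\<^sup>2 - c\<^sup>2) = 0"
  obtains "c = b \<or> c = - b" "b \<noteq> 0" "a\<^sup>2 \<noteq> b\<^sup>2"
    | eps del where "eps\<^sup>2 = 1" "del\<^sup>2 = 1" "a = eps * (b + c) / 2 + del * (b - c) / 2"
        "b + c \<noteq> 0" "b - c \<noteq> 0"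
proof (cases "b\<^sup>2 = c\<^sup>2")
  case True
  then show ?thesis using that(1) admissible_b_eq_pm_c[OF adm True] by (auto simp: power2_eq_iff)
next
  case False
  then obtain eps del :: complex where ed: "eps\<^sup>2 = 1" "del\<^sup>2 = 1" "a = eps * (b + c) / 2 + del * (b - c) / 2"
    using sum_of_squares_params[of a b c] deg by auto
  then show ?thesis using that(2) admissible_sum_of_squares[OF adm False ed] by blast
qed

theorem Ginvariant_curve_iff_F12:
  assumes "(a\<^sup>2 - b\<^sup>2) * (a\<^sup>2 - c\<^sup>2) * (b\<^sup>2 - c\<^sup>2) \<noteq> 0"
  shows "Xcurve a b c C \<and> Ginvariant C \<longleftrightarrow> C = F12 a b c"
proof -
  have "b\<^sup>2 \<noteq> c\<^sup>2" "a\<^sup>2 \<noteq> b\<^sup>2" "a\<^sup>2 \<noteq> c\<^sup>2" using assms by auto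
  moreover have "b + c \<noteq> 0" "b - c \<noteq> 0" using calculation(1) by (auto simp: power2_eq_iff add_eq_0_iff)
  ultimately interpret smooth_X a "(b + c) / 4" "(b - c) / 4" b c
    by unfold_locales (simp_all add: power2_eq_square field_simps)
  show ?thesis
  proof
    assume C: "Xcurve a b c C \<and> Ginvariant C"
    then obtain Z where "Xirreducible a b c Z" "Z \<subset> C" using XcurveD(2) by blast
    then show "C = F12 a b c"
      using Xcurve_eq_if_between[OF F12_Xcurve XcurveD(1)] Ginvariant_curve_subset_F12 C by blast
  qed (simp add: F12_Xcurve F12_Ginvariant)
qed

theorem no_Ginvariant_curve_degenerate:
  assumes "admissible a b c" and "(a\<^sup>2 - b\<^sup>2) * (a\<^sup>2 - c\<^sup>2) * (b\<^sup>2 - c\<^sup>2) = 0"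
    and "Xcurve a b c C" and "Ginvariant C"
  shows False
proof (rule degenerate_parameters[OF assms(1,2)])
  show False if "c = b \<or> c = - b" "b \<noteq> 0" "a\<^sup>2 \<noteq> b\<^sup>2"
    by (rule no_Ginvariant_curve_c_eq_pm_b[OF assms(3,4) that])
  show False if "eps\<^sup>2 = 1" "del\<^sup>2 = 1" "a = eps * (b + c) / 2 + del * (b - c) / 2"
    "b + c \<noteq> 0" "b - c \<noteq> 0" for eps del
    by (rule no_Ginvariant_curve_sum_of_squares_param[OF assms(3,4) that])
qed

theorem mainTheorem17:
  fixes a b c :: complex
  assumes "(a, b, c) \<noteq> (0, 0, 0)"
    and "\<forall>e1 e2 :: complex. e1 \<in> {1, -1} \<longrightarrow> e2 \<in> {1, -1} \<longrightarrow> \<not> proj_eq (a, b, c) (1, e1, e2)"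
    and "\<not> proj_eq (a, b, c) (1, 0, 0)" and "\<not> proj_eq (a, b, c) (0, 1, 0)"
    and "\<not> proj_eq (a, b, c) (0, 0, 1)"
  shows "((a\<^sup>2 - b\<^sup>2) * (a\<^sup>2 - c\<^sup>2) * (b\<^sup>2 - c\<^sup>2) \<noteq> 0 \<longrightarrow>
            (\<forall>C. (Xcurve a b c C \<and> Ginvariant C) \<longleftrightarrow> C = F12 a b c))
       \<and> ((a\<^sup>2 - b\<^sup>2) * (a\<^sup>2 - c\<^sup>2) * (b\<^sup>2 - c\<^sup>2) = 0 \<longrightarrow>
            \<not> (\<exists>C. Xcurve a b c C \<and> Ginvariant C))"
proof -
  have "admissible a b c" using assms unfolding admissible_def by blast
  then show ?thesis using Ginvariant_curve_iff_F12 no_Ginvariant_curve_degenerate by metis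
qed

end
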